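(* Let $k$ be a positive integer and $f\in\mathcal R^0_{[1]}(\mathbb R^2)$. Then for every integer $m\ge 2k$, the function $f^m$ is $k$-flat.
   Context: For $k\in\mathbb N\cup\{\infty\}$, $\mathcal R^k(\mathbb R^2)$ denotes the ring of functions $f:\mathbb R^2\to\mathbb R$ of class $C^k$ that coincide with $p/q$ ($p,q$ polynomials, $q$ nonvanishing there) on some nonempty Zariski open set. For $l\in\mathbb N$: consider compositions $\pi:M\to\mathbb R^2$ of successive blowings-up $M_i\to M_{i-1}$ ($M_0=\mathbb R^2$), each centred at points. An infinitely near point of order $j$ is a sequence $a_0\in M_0,\dots,a_j\in M_j$ where $M_i$ is the blowing-up of $M_{i-1}$ at $a_{i-1}$ and $a_i$ maps to $a_{i-1}$; the number of stages of $\pi$ is the maximal order of infinitely near points in $M$. $\mathcal R^k_{[l]}(\mathbb R^2)$ is the set of $f\in\mathcal R^k(\mathbb R^2)$ for which there is such a $\pi$ with at most $l$ stages such that $f\circ\pi$ is regular on $M$. A function $g:\mathbb R^2\to\mathbb R$ is $k$-flat at a point $a$ if $g$ is of class $C^k$ at $a$ and all partial derivatives of $g$ of order $\le k$ vanish at $a$; $g$ is $k$-flat if it is $k$-flat at every point of its zero set. *)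

theory Defs
  imports "HOL-Analysis.Analysis"
begin

definition polyfun2 :: "(real \<times> real \<Rightarrow> real) \<Rightarrow> bool" where
  "polyfun2 p \<longleftrightarrow> (\<exists>n::nat. \<exists>c::nat \<Rightarrow> nat \<Rightarrow> real.
      \<forall>x y. p (x, y) = (\<Sum>i\<le>n. \<Sum>j\<le>n. c i j * x ^ i * y ^ j))"

definition regular_at :: "(real \<times> real \<Rightarrow> real) \<Rightarrow> real \<times> real \<Rightarrow> bool" where
  "regular_at g z \<longleftrightarrow> (\<exists>p q U. polyfun2 p \<and> polyfun2 q \<and> open U \<and> z \<in> U \<and> q z \<noteq> 0 \<and>
      (\<forall>w\<in>U. g w = p w / q w))"

text \<open>f coincides with p/q (q nonvanishing there) on a nonempty Zariski open set.
  Every nonempty Zariski open subset of R^2 is of the form {g \<noteq> 0} with g a polynomial.\<close>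
definition rational_fun :: "(real \<times> real \<Rightarrow> real) \<Rightarrow> bool" where
  "rational_fun f \<longleftrightarrow> (\<exists>g p q. polyfun2 g \<and> polyfun2 p \<and> polyfun2 q \<and> (\<exists>z. g z \<noteq> 0) \<and>
      (\<forall>z. g z \<noteq> 0 \<longrightarrow> q z \<noteq> 0 \<and> f z = p z / q z))"

definition regulous0 :: "(real \<times> real \<Rightarrow> real) \<Rightarrow> bool" where
  "regulous0 f \<longleftrightarrow> continuous_on UNIV f \<and> rational_fun f"

text \<open>R^0_[1](R^2): there is a finite set C of points such that f composed with the
  blowing-up of R^2 at the points of C (at most one stage) is regular.  Regularity on
  the blown-up surface is checked away from C directly, and over each a in C in the two
  standard affine charts (u,v) \<mapsto> (a1+u, a2+uv) and (u,v) \<mapsto> (a1+uv, a2+v) at the points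
  of the exceptional divisor (u = 0, resp. v = 0).\<close>
definition regulous0_1 :: "(real \<times> real \<Rightarrow> real) \<Rightarrow> bool" where
  "regulous0_1 f \<longleftrightarrow> regulous0 f \<and>
     (\<exists>C. finite C \<and>
        (\<forall>z. z \<notin> C \<longrightarrow> regular_at f z) \<and>
        (\<forall>a\<in>C.
           (\<forall>v. regular_at (\<lambda>(u, w). f (fst a + u, snd a + u * w)) (0, v)) \<and>
           (\<forall>u. regular_at (\<lambda>(w, v). f (fst a + w * v, snd a + v)) (u, 0))))"

text \<open>Partial derivatives: index 0 is d/dx, any other index is d/dy.\<close>
definition pd :: "nat \<Rightarrow> (real \<times> real \<Rightarrow> real) \<Rightarrow> real \<times> real \<Rightarrow> real" where
  "pd i g = (\<lambda>(x, y). if i = 0 then deriv (\<lambda>t. g (t, y)) x else deriv (\<lambda>t. g (x, t)) y)"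

definition pdiff_at :: "nat \<Rightarrow> (real \<times> real \<Rightarrow> real) \<Rightarrow> real \<times> real \<Rightarrow> bool" where
  "pdiff_at i g z = (if i = 0 then (\<lambda>t. g (t, snd z)) differentiable (at (fst z))
                     else (\<lambda>t. g (fst z, t)) differentiable (at (snd z)))"

fun Ck_on :: "nat \<Rightarrow> (real \<times> real) set \<Rightarrow> (real \<times> real \<Rightarrow> real) \<Rightarrow> bool" where
  "Ck_on 0 U g = continuous_on U g"
| "Ck_on (Suc k) U g = (continuous_on U g \<and>
     (\<forall>i\<in>{0,1}. (\<forall>z\<in>U. pdiff_at i g z) \<and> Ck_on k U (pd i g)))"

fun pds :: "nat list \<Rightarrow> (real \<times> real \<Rightarrow> real) \<Rightarrow> real \<times> real \<Rightarrow> real" where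
  "pds [] g = g"
| "pds (i # is) g = pd i (pds is g)"

definition kflat_at :: "nat \<Rightarrow> (real \<times> real \<Rightarrow> real) \<Rightarrow> real \<times> real \<Rightarrow> bool" where
  "kflat_at k g a \<longleftrightarrow> (\<exists>U. open U \<and> a \<in> U \<and> Ck_on k U g) \<and>
     (\<forall>is. length is \<le> k \<and> set is \<subseteq> {0, 1} \<longrightarrow> pds is g a = 0)"

definition kflat :: "nat \<Rightarrow> (real \<times> real \<Rightarrow> real) \<Rightarrow> bool" where
  "kflat k g \<longleftrightarrow> (\<forall>a. g a = 0 \<longrightarrow> kflat_at k g a)"

end

theory Submission
  imports Defs
begin

(* Let f be continuous rational on R^2 and regular after blowing up a finite set C of
   points, and let a be a zero of f.  The proof shows that on a punctured ball around a,
   f is smooth of every order and every partial derivative of order j satisfies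
     |D^j f (z)| <= M * |z - a| ^ (1 - j)                                  (growth)
   Away from C this holds because f is regular (hence smooth) near a and f(a) = 0.  At a
   point of C it is read off in the two affine charts of the blowing-up: in the chart
   (x,t) |-> (x, x t) every derivative of f is H(x, y/x) / (x^j Q(x, y/x)^n) with H a
   polynomial vanishing on the exceptional divisor x = 0, so that |H| <= L |x|; a
   compactness argument along the divisor makes the constants uniform.

   By the Leibniz rule f^m then has growth exponent m, i.e. its derivatives of order j are
   O(|z - a|^(m - j)).  A function vanishing at a with growth exponent e >= k + 1 extends
   across a as a C^k function whose derivatives of order <= k vanish at a, since each such
   derivative is O(|z - a|^(e - j)) with e - j >= 1.  Here e = m >= 2k >= k + 1 as k > 0;
   so f^m is k-flat at a. *)

lemma pd_eq: "pd i g z = (if i = 0 then deriv (\<lambda>t. g (t, snd z)) (fst z) else deriv (\<lambda>t. g (fst z, t)) (snd z))"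
  by (cases z) (simp add: pd_def)

lemma pd_nonzero_index: "i \<noteq> 0 \<Longrightarrow> pd i = pd 1"
  by (auto simp: pd_def fun_eq_iff)

lemma pds_snoc: "pds (is @ [i]) g = pds is (pd i g)"
  by (induction "is") auto

lemma partials_of_has_derivative:
  assumes "(g has_derivative (\<lambda>v. fst v * A + snd v * B)) (at z)"
  shows "((\<lambda>t. g (t, snd z)) has_real_derivative A) (at (fst z))"
    and "((\<lambda>t. g (fst z, t)) has_real_derivative B) (at (snd z))"
proof -
  have z: "(fst z, snd z) = z" by simp
  have 1: "((\<lambda>t. (t, snd z)) has_derivative (\<lambda>h. (h, 0))) (at (fst z))"
    by (auto intro!: derivative_eq_intros)
  have "((g \<circ> (\<lambda>t. (t, snd z))) has_derivative ((\<lambda>v. fst v * A + snd v * B) \<circ> (\<lambda>h. (h, 0)))) (at (fst z))"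
    by (rule diff_chain_at[OF 1]) (simp add: z assms)
  then show "((\<lambda>t. g (t, snd z)) has_real_derivative A) (at (fst z))"
    by (simp add: has_field_derivative_def o_def mult.commute[of _ A] mult.commute[of _ B])
  have 2: "((\<lambda>t. (fst z, t)) has_derivative (\<lambda>h. (0, h))) (at (snd z))"
    by (auto intro!: derivative_eq_intros)
  have "((g \<circ> (\<lambda>t. (fst z, t))) has_derivative ((\<lambda>v. fst v * A + snd v * B) \<circ> (\<lambda>h. (0, h)))) (at (snd z))"
    by (rule diff_chain_at[OF 2]) (simp add: z assms)
  then show "((\<lambda>t. g (fst z, t)) has_real_derivative B) (at (snd z))"
    by (simp add: has_field_derivative_def o_def mult.commute[of _ A] mult.commute[of _ B])
qed

lemma pd_of_has_derivative:
  assumes "(g has_derivative (\<lambda>v. fst v * A + snd v * B)) (at z)"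
  shows "pd i g z = (if i = 0 then A else B)" "pdiff_at i g z"
  using partials_of_has_derivative[OF assms]
  by (auto simp: pd_eq pdiff_at_def DERIV_imp_deriv has_field_derivative_def intro: differentiableI)

lemma pd_const: "pd i (\<lambda>z. c) = (\<lambda>z. 0)"
proof
  fix z
  have "((\<lambda>z::real\<times>real. c) has_derivative (\<lambda>v. fst v * 0 + snd v * 0)) (at z)"
    by (rule has_derivative_eq_rhs[OF has_derivative_const]) simp
  from pd_of_has_derivative(1)[OF this, of i] show "pd i (\<lambda>z. c) z = 0" by simp
qed

lemma open_horizontal_slice:
  assumes "open W" shows "open {t::real. (t, c) \<in> W}"
proof -
  have "continuous_on UNIV (\<lambda>t::real. (t, c))" by (intro continuous_intros)
  from continuous_imp_open_vimage[OF this open_UNIV assms] show ?thesis by (simp add: vimage_def)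
qed

lemma open_vertical_slice:
  assumes "open W" shows "open {t::real. (c, t) \<in> W}"
proof -
  have "continuous_on UNIV (\<lambda>t::real. (c, t))" by (intro continuous_intros)
  from continuous_imp_open_vimage[OF this open_UNIV assms] show ?thesis by (simp add: vimage_def)
qed

lemma open_swap_vimage: "open U \<Longrightarrow> open {p::real\<times>real. (snd p, fst p) \<in> U}"
proof -
  assume U: "open U"
  have "continuous_on UNIV (\<lambda>p::real\<times>real. (snd p, fst p))" by (intro continuous_intros)
  from continuous_imp_open_vimage[OF this open_UNIV U] show ?thesis by (simp add: vimage_def)
qed

lemma pd_local:
  assumes "open W" "z \<in> W" "\<And>w. w \<in> W \<Longrightarrow> g w = h w"
  shows "pd i g z = pd i h z"
proof -
  have e1: "eventually (\<lambda>t. g (t, snd z) = h (t, snd z)) (nhds (fst z))"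
    unfolding eventually_nhds using open_horizontal_slice[OF assms(1), of "snd z"] assms(2,3)
    by (intro exI[of _ "{t. (t, snd z) \<in> W}"]) auto
  have e2: "eventually (\<lambda>t. g (fst z, t) = h (fst z, t)) (nhds (snd z))"
    unfolding eventually_nhds using open_vertical_slice[OF assms(1), of "fst z"] assms(2,3)
    by (intro exI[of _ "{t. (fst z, t) \<in> W}"]) auto
  show ?thesis unfolding pd_eq using deriv_cong_ev[OF e1 refl] deriv_cong_ev[OF e2 refl] by simp
qed

lemma deriv_shift: "deriv (\<lambda>t. F (t + c)) x = deriv F (x + c)"
  by (simp add: deriv_def DERIV_shift)

lemma pds_shift: "pds is (\<lambda>z. g (fst z + c1, snd z + c2)) z = pds is g (fst z + c1, snd z + c2)"
proof (induction "is" arbitrary: z)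
  case Nil then show ?case by simp
next
  case (Cons i "is")
  have e: "pds is (\<lambda>z. g (fst z + c1, snd z + c2)) = (\<lambda>z. pds is g (fst z + c1, snd z + c2))"
    using Cons.IH by (simp add: fun_eq_iff)
  show ?case
    by (simp add: e pd_eq deriv_shift[of "\<lambda>t. pds is g (t, snd z + c2)" c1]
        deriv_shift[of "\<lambda>t. pds is g (fst z + c1, t)" c2])
qed

definition swap_index :: "nat \<Rightarrow> nat" where "swap_index i = (if i = 0 then 1 else 0)"

lemma swap_index_0 [simp]: "swap_index 0 = 1" and swap_index_nonzero [simp]: "i \<noteq> 0 \<Longrightarrow> swap_index i = 0"
  by (auto simp: swap_index_def)

lemma pds_swap: "pds is (\<lambda>z. g (snd z, fst z)) z = pds (map swap_index is) g (snd z, fst z)"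
proof (induction "is" arbitrary: z)
  case Nil then show ?case by simp
next
  case (Cons i "is")
  have e: "pds is (\<lambda>z. g (snd z, fst z)) = (\<lambda>z. pds (map swap_index is) g (snd z, fst z))"
    using Cons.IH by (simp add: fun_eq_iff)
  show ?case by (cases "i = 0") (simp_all add: e pd_eq)
qed

text \<open>Polynomial functions on R^2, generated by constants and coordinates under sum and
  product.  This closure form is convenient for induction; every polyfun2 is one.\<close>

inductive poly2 :: "(real \<times> real \<Rightarrow> real) \<Rightarrow> bool" where
  pconst: "poly2 (\<lambda>z. c)"
| pfst: "poly2 fst"
| psnd: "poly2 snd"
| padd: "poly2 p \<Longrightarrow> poly2 q \<Longrightarrow> poly2 (\<lambda>z. p z + q z)"
| pmult: "poly2 p \<Longrightarrow> poly2 q \<Longrightarrow> poly2 (\<lambda>z. p z * q z)"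

lemma poly2_sum: "finite S \<Longrightarrow> (\<And>i. i \<in> S \<Longrightarrow> poly2 (f i)) \<Longrightarrow> poly2 (\<lambda>z. \<Sum>i\<in>S. f i z)"
proof (induction S rule: finite_induct)
  case empty then show ?case using poly2.pconst[of 0] by simp
next
  case (insert x F)
  have "poly2 (\<lambda>z. f x z + (\<Sum>i\<in>F. f i z))"
    by (rule poly2.padd) (use insert in auto)
  then show ?case using insert by simp
qed

lemma poly2_pow: "poly2 p \<Longrightarrow> poly2 (\<lambda>z. p z ^ n)"
proof (induction n)
  case 0 then show ?case using poly2.pconst[of 1] by simp
next
  case (Suc n) then show ?case using poly2.pmult[of p "\<lambda>z. p z ^ n"] by simp
qed

lemma poly2_diff: "poly2 p \<Longrightarrow> poly2 q \<Longrightarrow> poly2 (\<lambda>z. p z - q z)"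
  using poly2.padd[of p "\<lambda>z. (-1) * q z"] poly2.pmult[OF poly2.pconst[of "-1"], of q] by simp

lemma poly2_swap: "poly2 p \<Longrightarrow> poly2 (\<lambda>z. p (snd z, fst z))"
  by (induction rule: poly2.induct) (auto intro: poly2.intros)

lemma polyfun2_poly2: "polyfun2 p \<Longrightarrow> poly2 p"
proof -
  assume "polyfun2 p"
  then obtain n c where h: "\<forall>x y. p (x,y) = (\<Sum>i\<le>n. \<Sum>j\<le>n. c i j * x^i * y^j)"
    unfolding polyfun2_def by blast
  then have eq: "p = (\<lambda>z. \<Sum>i\<le>n. \<Sum>j\<le>n. c i j * fst z ^ i * snd z ^ j)"
    by (simp add: fun_eq_iff)
  have "poly2 (\<lambda>z. \<Sum>i\<le>n. \<Sum>j\<le>n. c i j * fst z ^ i * snd z ^ j)"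
    by (intro poly2_sum finite_atMost poly2.pmult poly2.pconst poly2_pow poly2.pfst poly2.psnd)
  then show ?thesis using eq by simp
qed

lemma regular_at_poly2:
  assumes "regular_at g z"
  shows "\<exists>P Q N. poly2 P \<and> poly2 Q \<and> open N \<and> z \<in> N \<and> Q z \<noteq> 0 \<and> (\<forall>p\<in>N. g p = P p / Q p)"
  using assms polyfun2_poly2 unfolding regular_at_def by blast

lemma poly2_has_derivative:
  "poly2 p \<Longrightarrow> \<exists>pu pw. poly2 pu \<and> poly2 pw \<and> (\<forall>z. (p has_derivative (\<lambda>v. fst v * pu z + snd v * pw z)) (at z))"
proof (induction rule: poly2.induct)
  case (pconst c)
  have "((\<lambda>z. c) has_derivative (\<lambda>v. fst v * 0 + snd v * 0)) (at z)" for z :: "real \<times> real"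
    by (rule has_derivative_eq_rhs[OF has_derivative_const]) simp
  then show ?case using poly2.pconst[of 0] by blast
next
  case pfst
  have "(fst has_derivative (\<lambda>v. fst v * 1 + snd v * 0)) (at z)" for z :: "real \<times> real"
    by (rule has_derivative_eq_rhs[OF has_derivative_fst[OF has_derivative_ident]]) simp
  then show ?case using poly2.pconst[of 0] poly2.pconst[of 1] by blast
next
  case psnd
  have "(snd has_derivative (\<lambda>v. fst v * 0 + snd v * 1)) (at z)" for z :: "real \<times> real"
    by (rule has_derivative_eq_rhs[OF has_derivative_snd[OF has_derivative_ident]]) simp
  then show ?case using poly2.pconst[of 0] poly2.pconst[of 1] by blast
next
  case (padd p q)
  then obtain pu pw qu qw where h: "poly2 pu" "poly2 pw" "poly2 qu" "poly2 qw"
    "\<And>z. (p has_derivative (\<lambda>v. fst v * pu z + snd v * pw z)) (at z)"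
    "\<And>z. (q has_derivative (\<lambda>v. fst v * qu z + snd v * qw z)) (at z)" by blast
  have "((\<lambda>z. p z + q z) has_derivative (\<lambda>v. fst v * (pu z + qu z) + snd v * (pw z + qw z))) (at z)" for z
    by (rule has_derivative_eq_rhs[OF has_derivative_add[OF h(5) h(6)]]) (simp add: fun_eq_iff algebra_simps)
  then show ?case using poly2.padd[OF h(1) h(3)] poly2.padd[OF h(2) h(4)] by blast
next
  case (pmult p q)
  then obtain pu pw qu qw where h: "poly2 pu" "poly2 pw" "poly2 qu" "poly2 qw"
    "\<And>z. (p has_derivative (\<lambda>v. fst v * pu z + snd v * pw z)) (at z)"
    "\<And>z. (q has_derivative (\<lambda>v. fst v * qu z + snd v * qw z)) (at z)" by blast
  have "((\<lambda>z. p z * q z) has_derivative (\<lambda>v. fst v * (p z * qu z + pu z * q z) + snd v * (p z * qw z + pw z * q z))) (at z)" for z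
    by (rule has_derivative_eq_rhs[OF has_derivative_mult[OF h(5) h(6)]]) (simp add: fun_eq_iff algebra_simps)
  moreover have "poly2 (\<lambda>z. p z * qu z + pu z * q z)" "poly2 (\<lambda>z. p z * qw z + pw z * q z)"
    using pmult h by (auto intro!: poly2.padd poly2.pmult)
  ultimately show ?case by blast
qed

lemma poly2_continuous: "poly2 p \<Longrightarrow> continuous_on S p"
proof -
  assume "poly2 p"
  then obtain pu pw where "\<forall>z. (p has_derivative (\<lambda>v. fst v * pu z + snd v * pw z)) (at z)"
    using poly2_has_derivative by blast
  then show ?thesis
    by (meson continuous_at_imp_continuous_on has_derivative_continuous)
qed

text \<open>It is the
  working notion of smoothness: it is stable under the field operations and yields C^n.\<close>

fun smooth_on :: "nat \<Rightarrow> (real \<times> real) set \<Rightarrow> (real \<times> real \<Rightarrow> real) \<Rightarrow> bool" where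
  "smooth_on 0 W h = (\<forall>z\<in>W. (h has_derivative (\<lambda>v. fst v * pd 0 h z + snd v * pd 1 h z)) (at z))"
| "smooth_on (Suc n) W h = (smooth_on 0 W h \<and> smooth_on n W (pd 0 h) \<and> smooth_on n W (pd 1 h))"

lemma smooth_on_0D: "smooth_on n W h \<Longrightarrow> smooth_on 0 W h" by (cases n) auto

lemma smooth_on_has_derivative: "smooth_on n W h \<Longrightarrow> z \<in> W \<Longrightarrow> (h has_derivative (\<lambda>v. fst v * pd 0 h z + snd v * pd 1 h z)) (at z)"
  using smooth_on_0D by fastforce

lemma smooth_on_mono: "smooth_on (Suc n) W h \<Longrightarrow> smooth_on n W h"
proof (induction n arbitrary: h)
  case 0 then show ?case by simp
next
  case (Suc n)
  then show ?case unfolding smooth_on.simps(2)[of "Suc n"] smooth_on.simps(2)[of n] by blast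
qed

lemma smooth_on_pd: "smooth_on (Suc n) W h \<Longrightarrow> smooth_on n W (pd i h)"
proof (cases "i = 0")
  case False
  then have "pd i h = pd 1 h" using pd_nonzero_index[of i] by simp
  then show "smooth_on (Suc n) W h \<Longrightarrow> smooth_on n W (pd i h)" by simp
qed simp

lemma smooth_on_le: "m \<le> n \<Longrightarrow> smooth_on n W h \<Longrightarrow> smooth_on m W h"
proof (induction n)
  case 0 then show ?case by simp
next
  case (Suc n)
  show ?case
  proof (cases "m = Suc n")
    case True then show ?thesis using Suc by simp
  next
    case False then have "m \<le> n" using Suc(2) by simp
    then show ?thesis using Suc.IH smooth_on_mono[OF Suc(3)] by blast
  qed
qed

lemma smooth_on_subset: "smooth_on n W h \<Longrightarrow> W' \<subseteq> W \<Longrightarrow> smooth_on n W' h"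
proof (induction n arbitrary: h)
  case 0 then show ?case by auto
next
  case (Suc n)
  from Suc.prems(1) have a: "smooth_on 0 W h" "smooth_on n W (pd 0 h)" "smooth_on n W (pd 1 h)" by simp_all
  have "smooth_on 0 W' h" using a(1) Suc.prems(2) by auto
  then show ?case using Suc.IH[OF a(2) Suc.prems(2)] Suc.IH[OF a(3) Suc.prems(2)] by simp
qed

lemma smooth_on_pds: "smooth_on n W h \<Longrightarrow> length is \<le> n \<Longrightarrow> smooth_on (n - length is) W (pds is h)"
proof (induction "is")
  case Nil then show ?case by simp
next
  case (Cons i "is")
  then have "smooth_on (n - length is) W (pds is h)" by simp
  moreover have "n - length is = Suc (n - length (i # is))" using Cons.prems(2) by simp
  ultimately have "smooth_on (Suc (n - length (i # is))) W (pds is h)" by simp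
  then have "smooth_on (n - length (i # is)) W (pd i (pds is h))" by (rule smooth_on_pd)
  then show ?case by simp
qed

text \<open>Differentiable functions have the partials as derivative; and smoothness only depends on
  the values on W (needed because rational functions are only given locally).\<close>

lemma has_derivative_by_partials:
  assumes "(g has_derivative (\<lambda>v. fst v * A + snd v * B)) (at z)"
  shows "(g has_derivative (\<lambda>v. fst v * pd 0 g z + snd v * pd 1 g z)) (at z)"
  using assms pd_of_has_derivative(1)[OF assms, of 0] pd_of_has_derivative(1)[OF assms, of 1] by simp

lemma smooth_on0_local: "open W \<Longrightarrow> smooth_on 0 W g \<Longrightarrow> (\<And>w. w \<in> W \<Longrightarrow> g w = h w) \<Longrightarrow> smooth_on 0 W h"
  unfolding smooth_on.simps
proof
  fix z assume a: "open W" "\<forall>z\<in>W. (g has_derivative (\<lambda>v. fst v * pd 0 g z + snd v * pd 1 g z)) (at z)"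
    "\<And>w. w \<in> W \<Longrightarrow> g w = h w" and z: "z \<in> W"
  have "(h has_derivative (\<lambda>v. fst v * pd 0 g z + snd v * pd 1 g z)) (at z)"
    by (rule has_derivative_transform_within_open[OF a(2)[rule_format, OF z] a(1) z a(3)])
  moreover have "pd i g z = pd i h z" for i by (rule pd_local[OF a(1) z a(3)])
  ultimately show "(h has_derivative (\<lambda>v. fst v * pd 0 h z + snd v * pd 1 h z)) (at z)" by simp
qed

lemma smooth_on_local: "open W \<Longrightarrow> smooth_on n W g \<Longrightarrow> (\<And>w. w \<in> W \<Longrightarrow> g w = h w) \<Longrightarrow> smooth_on n W h"
proof (induction n arbitrary: g h)
  case 0
  then show ?case using smooth_on0_local by blast
next
  case (Suc n)
  have "smooth_on n W (pd i h)" for i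
  proof (rule Suc.IH[OF Suc(2)])
    show "smooth_on n W (pd i g)" using smooth_on_pd[OF Suc(3)] .
    show "\<And>w. w \<in> W \<Longrightarrow> pd i g w = pd i h w" by (rule pd_local[OF Suc(2) _ Suc(4)])
  qed
  moreover have "smooth_on 0 W h" by (rule smooth_on0_local[OF Suc(2) smooth_on_0D[OF Suc(3)] Suc(4)])
  ultimately show ?case by simp
qed

lemma smooth_on_cover: "(\<And>z. z \<in> W \<Longrightarrow> \<exists>W'. open W' \<and> z \<in> W' \<and> smooth_on n W' h) \<Longrightarrow> smooth_on n W h"
proof (induction n arbitrary: h)
  case 0
  show ?case unfolding smooth_on.simps
  proof
    fix z assume "z \<in> W"
    then obtain W' where "open W'" "z \<in> W'" "smooth_on 0 W' h" using 0 by blast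
    then show "(h has_derivative (\<lambda>v. fst v * pd 0 h z + snd v * pd 1 h z)) (at z)" by simp
  qed
next
  case (Suc n)
  have "smooth_on n W (pd i h)" for i
  proof (rule Suc.IH)
    fix z assume "z \<in> W"
    then obtain W' where "open W'" "z \<in> W'" "smooth_on (Suc n) W' h" using Suc.prems by blast
    then show "\<exists>W'. open W' \<and> z \<in> W' \<and> smooth_on n W' (pd i h)" using smooth_on_pd by blast
  qed
  moreover have "smooth_on 0 W h" unfolding smooth_on.simps
  proof
    fix z assume "z \<in> W"
    then obtain W' where "open W'" "z \<in> W'" "smooth_on (Suc n) W' h" using Suc.prems by blast
    then show "(h has_derivative (\<lambda>v. fst v * pd 0 h z + snd v * pd 1 h z)) (at z)" by (simp add: smooth_on_has_derivative)
  qed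
  ultimately show ?case by simp
qed

lemma pd_add: "smooth_on n W g \<Longrightarrow> smooth_on m W h \<Longrightarrow> z \<in> W \<Longrightarrow> pd i (\<lambda>z. g z + h z) z = pd i g z + pd i h z"
proof -
  assume a: "smooth_on n W g" "smooth_on m W h" "z \<in> W"
  have "((\<lambda>z. g z + h z) has_derivative (\<lambda>v. fst v * (pd 0 g z + pd 0 h z) + snd v * (pd 1 g z + pd 1 h z))) (at z)"
    by (rule has_derivative_eq_rhs[OF has_derivative_add[OF smooth_on_has_derivative[OF a(1,3)] smooth_on_has_derivative[OF a(2,3)]]])
      (simp add: fun_eq_iff algebra_simps)
  from pd_of_has_derivative(1)[OF this, of i] pd_of_has_derivative(1)[OF this, of 0] pd_of_has_derivative(1)[OF this, of 1]
  show ?thesis by (cases "i = 0") (simp_all add: pd_nonzero_index[of i])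
qed

lemma pd_mult: "smooth_on n W g \<Longrightarrow> smooth_on m W h \<Longrightarrow> z \<in> W \<Longrightarrow> pd i (\<lambda>z. g z * h z) z = pd i g z * h z + g z * pd i h z"
proof -
  assume a: "smooth_on n W g" "smooth_on m W h" "z \<in> W"
  have "((\<lambda>z. g z * h z) has_derivative (\<lambda>v. fst v * (pd 0 g z * h z + g z * pd 0 h z) + snd v * (pd 1 g z * h z + g z * pd 1 h z))) (at z)"
    by (rule has_derivative_eq_rhs[OF has_derivative_mult[OF smooth_on_has_derivative[OF a(1,3)] smooth_on_has_derivative[OF a(2,3)]]])
      (simp add: fun_eq_iff algebra_simps)
  from pd_of_has_derivative(1)[OF this, of i] pd_of_has_derivative(1)[OF this, of 0] pd_of_has_derivative(1)[OF this, of 1]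
  show ?thesis by (cases "i = 0") (simp_all add: pd_nonzero_index[of i])
qed

lemma pd_inverse: "smooth_on n W q \<Longrightarrow> z \<in> W \<Longrightarrow> q z \<noteq> 0 \<Longrightarrow>
   pd i (\<lambda>z. inverse (q z)) z = (-1) * pd i q z * inverse (q z) * inverse (q z)"
proof -
  assume a: "smooth_on n W q" "z \<in> W" "q z \<noteq> 0"
  have "((\<lambda>z. inverse (q z)) has_derivative (\<lambda>v. fst v * ((-1) * pd 0 q z * inverse (q z) * inverse (q z))
      + snd v * ((-1) * pd 1 q z * inverse (q z) * inverse (q z)))) (at z)"
    by (rule has_derivative_eq_rhs[OF Deriv.has_derivative_inverse[OF a(3) smooth_on_has_derivative[OF a(1,2)]]])
      (simp add: fun_eq_iff algebra_simps)
  from pd_of_has_derivative(1)[OF this, of i] pd_of_has_derivative(1)[OF this, of 0] pd_of_has_derivative(1)[OF this, of 1]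
  show ?thesis by (cases "i = 0") (simp_all add: pd_nonzero_index[of i])
qed

lemma smooth_on_add0: "open W \<Longrightarrow> smooth_on n W g \<Longrightarrow> smooth_on m W h \<Longrightarrow> smooth_on 0 W (\<lambda>z. g z + h z)"
  unfolding smooth_on.simps
proof
  fix z assume a: "open W" "smooth_on n W g" "smooth_on m W h" and z: "z \<in> W"
  show "((\<lambda>z. g z + h z) has_derivative (\<lambda>v. fst v * pd 0 (\<lambda>z. g z + h z) z + snd v * pd 1 (\<lambda>z. g z + h z) z)) (at z)"
    unfolding pd_add[OF a(2,3) z]
    by (rule has_derivative_eq_rhs[OF has_derivative_add[OF smooth_on_has_derivative[OF a(2) z] smooth_on_has_derivative[OF a(3) z]]])
      (simp add: fun_eq_iff algebra_simps)
qed

lemma smooth_on_add: "open W \<Longrightarrow> smooth_on n W g \<Longrightarrow> smooth_on n W h \<Longrightarrow> smooth_on n W (\<lambda>z. g z + h z)"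
proof (induction n arbitrary: g h)
  case 0
  then show ?case using smooth_on_add0 by blast
next
  case (Suc n)
  have "smooth_on n W (pd i (\<lambda>z. g z + h z))" for i
  proof -
    have "smooth_on n W (\<lambda>z. pd i g z + pd i h z)"
      by (rule Suc.IH[OF Suc(2) smooth_on_pd[OF Suc(3)] smooth_on_pd[OF Suc(4)]])
    then show ?thesis
    proof (rule smooth_on_local[OF Suc(2)])
      fix w assume "w \<in> W" then show "pd i g w + pd i h w = pd i (\<lambda>z. g z + h z) w"
        using pd_add[OF Suc(3,4)] by simp
    qed
  qed
  moreover have "smooth_on 0 W (\<lambda>z. g z + h z)"
    using smooth_on_add0[OF Suc(2) smooth_on_0D[OF Suc(3)] smooth_on_0D[OF Suc(4)]] .
  ultimately show ?case by simp
qed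

lemma smooth_on_mult0: "smooth_on n W g \<Longrightarrow> smooth_on m W h \<Longrightarrow> smooth_on 0 W (\<lambda>z. g z * h z)"
  unfolding smooth_on.simps
proof
  fix z assume a: "smooth_on n W g" "smooth_on m W h" and z: "z \<in> W"
  show "((\<lambda>z. g z * h z) has_derivative (\<lambda>v. fst v * pd 0 (\<lambda>z. g z * h z) z + snd v * pd 1 (\<lambda>z. g z * h z) z)) (at z)"
    unfolding pd_mult[OF a(1,2) z]
    by (rule has_derivative_eq_rhs[OF has_derivative_mult[OF smooth_on_has_derivative[OF a(1) z] smooth_on_has_derivative[OF a(2) z]]])
      (simp add: fun_eq_iff algebra_simps)
qed

lemma smooth_on_mult: "open W \<Longrightarrow> smooth_on n W g \<Longrightarrow> smooth_on n W h \<Longrightarrow> smooth_on n W (\<lambda>z. g z * h z)"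
proof (induction n arbitrary: g h)
  case 0
  then show ?case using smooth_on_mult0 by blast
next
  case (Suc n)
  have "smooth_on n W (pd i (\<lambda>z. g z * h z))" for i
  proof -
    have "smooth_on n W (\<lambda>z. pd i g z * h z + g z * pd i h z)"
      by (rule smooth_on_add[OF Suc(2) Suc.IH[OF Suc(2) smooth_on_pd[OF Suc(3)] smooth_on_mono[OF Suc(4)]]
            Suc.IH[OF Suc(2) smooth_on_mono[OF Suc(3)] smooth_on_pd[OF Suc(4)]]])
    then show ?thesis
    proof (rule smooth_on_local[OF Suc(2)])
      fix w assume "w \<in> W" then show "pd i g w * h w + g w * pd i h w = pd i (\<lambda>z. g z * h z) w"
        using pd_mult[OF Suc(3,4)] by simp
    qed
  qed
  moreover have "smooth_on 0 W (\<lambda>z. g z * h z)"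
    using smooth_on_mult0[OF Suc(3) Suc(4)] .
  ultimately show ?case by simp
qed

lemma smooth_on_poly: "poly2 p \<Longrightarrow> smooth_on n W p"
proof (induction n arbitrary: p)
  case 0
  then obtain pu pw where h: "\<And>z. (p has_derivative (\<lambda>v. fst v * pu z + snd v * pw z)) (at z)"
    using poly2_has_derivative by blast
  show ?case using has_derivative_by_partials[OF h] by simp
next
  case (Suc n)
  then obtain pu pw where h: "poly2 pu" "poly2 pw" "\<And>z. (p has_derivative (\<lambda>v. fst v * pu z + snd v * pw z)) (at z)"
    using poly2_has_derivative by blast
  have e0: "pd 0 p = pu" using pd_of_has_derivative(1)[OF h(3), of 0] by (simp add: fun_eq_iff)
  have e1: "pd 1 p = pw" using pd_of_has_derivative(1)[OF h(3), of 1] by (simp add: fun_eq_iff)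
  have e1': "pd (Suc 0) p = pw" using e1 by simp
  show ?case using Suc.IH[OF h(1)] Suc.IH[OF h(2)] has_derivative_by_partials[OF h(3)] by (simp add: e0 e1 e1')
qed

lemma smooth_on_const: "smooth_on n W (\<lambda>z. c)"
  by (rule smooth_on_poly[OF poly2.pconst])

lemma smooth_on_inverse: "open W \<Longrightarrow> smooth_on n W q \<Longrightarrow> (\<And>z. z \<in> W \<Longrightarrow> q z \<noteq> 0) \<Longrightarrow> smooth_on n W (\<lambda>z. inverse (q z))"
proof (induction n arbitrary: q)
  case 0
  show ?case unfolding smooth_on.simps
  proof
    fix z assume z: "z \<in> W"
    show "((\<lambda>z. inverse (q z)) has_derivative (\<lambda>v. fst v * pd 0 (\<lambda>z. inverse (q z)) z + snd v * pd 1 (\<lambda>z. inverse (q z)) z)) (at z)"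
      unfolding pd_inverse[OF 0(2) z 0(3)[OF z]]
      by (rule has_derivative_eq_rhs[OF Deriv.has_derivative_inverse[OF 0(3)[OF z] smooth_on_has_derivative[OF 0(2) z]]])
        (simp add: fun_eq_iff algebra_simps)
  qed
next
  case (Suc n)
  have I: "smooth_on n W (\<lambda>z. inverse (q z))" by (rule Suc.IH[OF Suc(2) smooth_on_mono[OF Suc(3)] Suc(4)])
  have "smooth_on n W (pd i (\<lambda>z. inverse (q z)))" for i
  proof -
    have "smooth_on n W (\<lambda>z. (-1) * pd i q z * inverse (q z) * inverse (q z))"
      by (intro smooth_on_mult[OF Suc(2)] smooth_on_const smooth_on_pd[OF Suc(3)] I)
    then show ?thesis
    proof (rule smooth_on_local[OF Suc(2)])
      fix w assume "w \<in> W" then show "(-1) * pd i q w * inverse (q w) * inverse (q w) = pd i (\<lambda>z. inverse (q z)) w"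
        using pd_inverse[OF Suc(3) _ Suc(4)] by simp
    qed
  qed
  moreover have "smooth_on 0 W (\<lambda>z. inverse (q z))" using I by (rule smooth_on_0D)
  ultimately show ?case by simp
qed

lemma smooth_on_pow: "open W \<Longrightarrow> smooth_on n W f \<Longrightarrow> smooth_on n W (\<lambda>z. f z ^ m)"
proof (induction m)
  case 0 then show ?case using smooth_on_const[of n W 1] by simp
next
  case (Suc m) then show ?case using smooth_on_mult[of W n f "\<lambda>z. f z ^ m"] by simp
qed

lemma regular_at_smooth_on: "regular_at f z \<Longrightarrow> \<exists>W. open W \<and> z \<in> W \<and> smooth_on n W f"
proof -
  assume "regular_at f z"
  then obtain p q U where h: "polyfun2 p" "polyfun2 q" "open U" "z \<in> U" "q z \<noteq> 0" "\<forall>w\<in>U. f w = p w / q w"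
    unfolding regular_at_def by blast
  have pp: "poly2 p" "poly2 q" using h polyfun2_poly2 by auto
  let ?W = "U \<inter> {w. q w \<noteq> 0}"
  have o: "open ?W" by (intro open_Int h(3) open_Collect_neq poly2_continuous[OF pp(2)] continuous_on_const)
  have "smooth_on n ?W (\<lambda>w. p w * inverse (q w))"
    by (intro smooth_on_mult[OF o] smooth_on_poly[OF pp(1)] smooth_on_inverse[OF o smooth_on_poly[OF pp(2)]]) auto
  then have "smooth_on n ?W f" by (rule smooth_on_local[OF o]) (use h(6) in \<open>auto simp: divide_inverse\<close>)
  then show ?thesis using o h by blast
qed

fun growth :: "nat \<Rightarrow> (real \<times> real) set \<Rightarrow> real \<times> real \<Rightarrow> real \<Rightarrow> (real \<times> real \<Rightarrow> real) \<Rightarrow> bool" where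
  "growth 0 V a e h = (\<exists>M. \<forall>z\<in>V. \<bar>h z\<bar> \<le> M * dist z a powr e)"
| "growth (Suc n) V a e h = (growth 0 V a e h \<and> growth n V a (e - 1) (pd 0 h) \<and> growth n V a (e - 1) (pd 1 h))"

lemma growth_0D: "growth n V a e h \<Longrightarrow> growth 0 V a e h" by (cases n) auto

lemma growth_mono: "growth (Suc n) V a e h \<Longrightarrow> growth n V a e h"
proof (induction n arbitrary: e h)
  case 0 then show ?case by simp
next
  case (Suc n)
  then show ?case unfolding growth.simps(2)[of "Suc n"] growth.simps(2)[of n] by blast
qed

lemma growth_pd: "growth (Suc n) V a e h \<Longrightarrow> growth n V a (e - 1) (pd i h)"
proof (cases "i = 0")
  case False
  then have "pd i h = pd 1 h" using pd_nonzero_index[of i] by simp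
  then show "growth (Suc n) V a e h \<Longrightarrow> growth n V a (e - 1) (pd i h)" by simp
qed simp

lemma growth0_nonneg: "growth 0 V a e h \<Longrightarrow> \<exists>M\<ge>0. \<forall>z\<in>V. \<bar>h z\<bar> \<le> M * dist z a powr e"
proof -
  assume "growth 0 V a e h"
  then obtain M where M: "\<forall>z\<in>V. \<bar>h z\<bar> \<le> M * dist z a powr e" by auto
  have "\<forall>z\<in>V. \<bar>h z\<bar> \<le> max M 0 * dist z a powr e"
  proof
    fix z assume "z \<in> V"
    then have "\<bar>h z\<bar> \<le> M * dist z a powr e" using M by blast
    also have "\<dots> \<le> max M 0 * dist z a powr e" by (rule mult_right_mono) auto
    finally show "\<bar>h z\<bar> \<le> max M 0 * dist z a powr e" .
  qed
  then show ?thesis by (intro exI[of _ "max M 0"]) auto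
qed

lemma growth_subset: "growth n V a e h \<Longrightarrow> V' \<subseteq> V \<Longrightarrow> growth n V' a e h"
proof (induction n arbitrary: e h)
  case 0 then show ?case by (simp, meson subsetD)
next
  case (Suc n)
  have "growth 0 V' a e h" using growth_0D[OF Suc.prems(1)] Suc.prems(2) by (simp, meson subsetD)
  then show ?case using Suc by simp
qed

lemma growth_of_pds:
  "(\<And>is. length is \<le> n \<Longrightarrow> \<exists>M. \<forall>z\<in>V. \<bar>pds is h z\<bar> \<le> M * dist z a powr (e - real (length is))) \<Longrightarrow> growth n V a e h"
proof (induction n arbitrary: e h)
  case 0
  from 0[of "[]"] show ?case by simp
next
  case (Suc n)
  have "growth n V a (e - 1) (pd i h)" for i
  proof (rule Suc.IH)
    fix "is" :: "nat list" assume "length is \<le> n"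
    then obtain M where "\<forall>z\<in>V. \<bar>pds (is @ [i]) h z\<bar> \<le> M * dist z a powr (e - real (length (is @ [i])))"
      using Suc.prems[of "is @ [i]"] by auto
    then show "\<exists>M. \<forall>z\<in>V. \<bar>pds is (pd i h) z\<bar> \<le> M * dist z a powr (e - 1 - real (length is))"
      by (auto simp: pds_snoc algebra_simps)
  qed
  moreover have "growth 0 V a e h" using Suc.prems[of "[]"] by simp
  ultimately show ?case by simp
qed

lemma growth0_local: "growth 0 V a e g \<Longrightarrow> (\<And>w. w \<in> V \<Longrightarrow> g w = h w) \<Longrightarrow> growth 0 V a e h"
proof -
  assume a: "growth 0 V a e g" "\<And>w. w \<in> V \<Longrightarrow> g w = h w"
  then obtain M where "\<forall>z\<in>V. \<bar>g z\<bar> \<le> M * dist z a powr e" by auto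
  then have "\<forall>z\<in>V. \<bar>h z\<bar> \<le> M * dist z a powr e" using a(2) by auto
  then show ?thesis by auto
qed

lemma growth_local: "open V \<Longrightarrow> growth n V a e g \<Longrightarrow> (\<And>w. w \<in> V \<Longrightarrow> g w = h w) \<Longrightarrow> growth n V a e h"
proof (induction n arbitrary: e g h)
  case 0
  then show ?case using growth0_local by blast
next
  case (Suc n)
  have "growth n V a (e - 1) (pd i h)" for i
  proof (rule Suc.IH[OF Suc(2)])
    show "growth n V a (e - 1) (pd i g)" using growth_pd[OF Suc(3)] .
    show "\<And>w. w \<in> V \<Longrightarrow> pd i g w = pd i h w" by (rule pd_local[OF Suc(2) _ Suc(4)])
  qed
  moreover have "growth 0 V a e h" by (rule growth0_local[OF growth_0D[OF Suc(3)] Suc(4)])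
  ultimately show ?case by simp
qed

lemma growth0_add: "growth 0 V a e g \<Longrightarrow> growth 0 V a e h \<Longrightarrow> growth 0 V a e (\<lambda>z. g z + h z)"
proof -
  assume "growth 0 V a e g" "growth 0 V a e h"
  then obtain M1 M2 where M: "\<forall>z\<in>V. \<bar>g z\<bar> \<le> M1 * dist z a powr e" "\<forall>z\<in>V. \<bar>h z\<bar> \<le> M2 * dist z a powr e" by auto
  have "\<forall>z\<in>V. \<bar>g z + h z\<bar> \<le> (M1 + M2) * dist z a powr e"
  proof
    fix z assume "z \<in> V"
    then have "\<bar>g z\<bar> \<le> M1 * dist z a powr e" "\<bar>h z\<bar> \<le> M2 * dist z a powr e" using M by auto
    then show "\<bar>g z + h z\<bar> \<le> (M1 + M2) * dist z a powr e" by (simp add: algebra_simps)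
  qed
  then show ?thesis by auto
qed

lemma growth0_mult: "growth 0 V a e g \<Longrightarrow> growth 0 V a e' h \<Longrightarrow> E = e + e' \<Longrightarrow> growth 0 V a E (\<lambda>z. g z * h z)"
proof -
  assume a: "growth 0 V a e g" "growth 0 V a e' h" "E = e + e'"
  obtain M1 where M1: "M1 \<ge> 0" "\<forall>z\<in>V. \<bar>g z\<bar> \<le> M1 * dist z a powr e" using growth0_nonneg[OF a(1)] by auto
  obtain M2 where M2: "M2 \<ge> 0" "\<forall>z\<in>V. \<bar>h z\<bar> \<le> M2 * dist z a powr e'" using growth0_nonneg[OF a(2)] by auto
  have "\<forall>z\<in>V. \<bar>g z * h z\<bar> \<le> (M1 * M2) * dist z a powr E"
  proof
    fix z assume "z \<in> V"
    then have b: "\<bar>g z\<bar> \<le> M1 * dist z a powr e" "\<bar>h z\<bar> \<le> M2 * dist z a powr e'" using M1 M2 by auto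
    have "\<bar>g z * h z\<bar> = \<bar>g z\<bar> * \<bar>h z\<bar>" by (simp add: abs_mult)
    also have "\<dots> \<le> (M1 * dist z a powr e) * (M2 * dist z a powr e')"
      by (rule mult_mono[OF b]) (auto simp: M1 M2)
    also have "\<dots> = (M1 * M2) * dist z a powr E" by (simp add: a(3) powr_add)
    finally show "\<bar>g z * h z\<bar> \<le> (M1 * M2) * dist z a powr E" .
  qed
  then show ?thesis by auto
qed

lemma growth_add: "open V \<Longrightarrow> smooth_on n V g \<Longrightarrow> smooth_on n V h \<Longrightarrow> growth n V a e g \<Longrightarrow> growth n V a e h \<Longrightarrow> growth n V a e (\<lambda>z. g z + h z)"
proof (induction n arbitrary: e g h)
  case 0
  then show ?case using growth0_add by simp
next
  case (Suc n)
  have "growth n V a (e - 1) (pd i (\<lambda>z. g z + h z))" for i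
  proof -
    have "growth n V a (e - 1) (\<lambda>z. pd i g z + pd i h z)"
      by (rule Suc.IH[OF Suc(2) smooth_on_pd[OF Suc(3)] smooth_on_pd[OF Suc(4)] growth_pd[OF Suc(5)] growth_pd[OF Suc(6)]])
    then show ?thesis
    proof (rule growth_local[OF Suc(2)])
      fix w assume "w \<in> V" then show "pd i g w + pd i h w = pd i (\<lambda>z. g z + h z) w"
        using pd_add[OF Suc(3,4)] by simp
    qed
  qed
  moreover have "growth 0 V a e (\<lambda>z. g z + h z)" by (rule growth0_add[OF growth_0D[OF Suc(5)] growth_0D[OF Suc(6)]])
  ultimately show ?case by simp
qed

lemma growth_mult: "open V \<Longrightarrow> smooth_on n V g \<Longrightarrow> smooth_on n V h \<Longrightarrow> growth n V a e g \<Longrightarrow> growth n V a e' h \<Longrightarrow> E = e + e' \<Longrightarrow>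
  growth n V a E (\<lambda>z. g z * h z)"
proof (induction n arbitrary: e e' E g h)
  case 0
  then show ?case using growth0_mult by simp
next
  case (Suc n)
  have "growth n V a (E - 1) (pd i (\<lambda>z. g z * h z))" for i
  proof -
    have "growth n V a (E - 1) (\<lambda>z. pd i g z * h z + g z * pd i h z)"
    proof (rule growth_add[OF Suc(2)])
      show "smooth_on n V (\<lambda>z. pd i g z * h z)" by (rule smooth_on_mult[OF Suc(2) smooth_on_pd[OF Suc(3)] smooth_on_mono[OF Suc(4)]])
      show "smooth_on n V (\<lambda>z. g z * pd i h z)" by (rule smooth_on_mult[OF Suc(2) smooth_on_mono[OF Suc(3)] smooth_on_pd[OF Suc(4)]])
      show "growth n V a (E - 1) (\<lambda>z. pd i g z * h z)"
        by (rule Suc.IH[OF Suc(2) smooth_on_pd[OF Suc(3)] smooth_on_mono[OF Suc(4)] growth_pd[OF Suc(5)] growth_mono[OF Suc(6)]])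
          (use Suc(7) in simp)
      show "growth n V a (E - 1) (\<lambda>z. g z * pd i h z)"
        by (rule Suc.IH[OF Suc(2) smooth_on_mono[OF Suc(3)] smooth_on_pd[OF Suc(4)] growth_mono[OF Suc(5)] growth_pd[OF Suc(6)]])
          (use Suc(7) in simp)
    qed
    then show ?thesis
    proof (rule growth_local[OF Suc(2)])
      fix w assume "w \<in> V" then show "pd i g w * h w + g w * pd i h w = pd i (\<lambda>z. g z * h z) w"
        using pd_mult[OF Suc(3,4)] by simp
    qed
  qed
  moreover have "growth 0 V a E (\<lambda>z. g z * h z)" by (rule growth0_mult[OF growth_0D[OF Suc(5)] growth_0D[OF Suc(6)] Suc(7)])
  ultimately show ?case by simp
qed

lemma growth_zero: "growth n V a e (\<lambda>z. 0)"
proof (induction n arbitrary: e)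
  case 0 then show ?case by (simp, intro exI[of _ 0]) simp
next
  case (Suc n)
  have "growth 0 V a e (\<lambda>z. 0)" by (simp, intro exI[of _ 0]) simp
  then show ?case using Suc by (simp add: pd_const)
qed

lemma growth_one: "a \<notin> V \<Longrightarrow> growth n V a 0 (\<lambda>z. 1)"
proof (cases n)
  case 0
  assume "a \<notin> V"
  then have "\<forall>z\<in>V. \<bar>1::real\<bar> \<le> 1 * dist z a powr 0" by auto
  then show ?thesis using 0 by (simp del: powr_zero_eq_one) (intro exI[of _ 1], simp)
next
  case (Suc m)
  assume "a \<notin> V"
  then have "\<forall>z\<in>V. \<bar>1::real\<bar> \<le> 1 * dist z a powr 0" by auto
  then have "growth 0 V a 0 (\<lambda>z. 1)" by (simp del: powr_zero_eq_one) (intro exI[of _ 1], simp)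
  then show ?thesis using Suc by (simp add: pd_const growth_zero)
qed

lemma growth_pow: "open V \<Longrightarrow> a \<notin> V \<Longrightarrow> smooth_on n V f \<Longrightarrow> growth n V a 1 f \<Longrightarrow> growth n V a (real m) (\<lambda>z. f z ^ m)"
proof (induction m)
  case 0 then show ?case using growth_one[of a V n] by simp
next
  case (Suc m)
  have "growth n V a (real (Suc m)) (\<lambda>z. f z * f z ^ m)"
    by (rule growth_mult[OF Suc(2) Suc(4) smooth_on_pow[OF Suc(2) Suc(4)] Suc(5) Suc.IH[OF Suc(2-5)]]) simp
  then show ?case by simp
qed

text \<open>If g(a) = 0 and g has growth exponent e \<ge> k + 1 on a punctured
  ball around a, the bound forces continuity at a and vanishing partials at a; inductively,
  g is C^k on the ball with all partials of order \<le> k vanishing at a.\<close>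

lemma dist_horizontal: "dist (fst a + h, snd a) a = \<bar>h\<bar>"
  by (cases a) (simp add: dist_Pair_Pair dist_real_def)

lemma dist_vertical: "dist (fst a, snd a + h) a = \<bar>h\<bar>"
  by (cases a) (simp add: dist_Pair_Pair dist_real_def)

lemma tendsto_quotient_zero:
  fixes G :: "real \<Rightarrow> real"
  assumes "\<rho> > 0" and M: "\<And>h. h \<noteq> 0 \<Longrightarrow> \<bar>h\<bar> < \<rho> \<Longrightarrow> \<bar>G h\<bar> \<le> M * \<bar>h\<bar> powr e" and e: "e > 1"
  shows "((\<lambda>h. G h / h) \<longlongrightarrow> 0) (at 0)"
proof (rule Lim_null_comparison)
  show "\<forall>\<^sub>F h in at (0::real). norm (G h / h) \<le> M * \<bar>h\<bar> powr (e - 1)"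
    unfolding eventually_at
  proof (intro exI[of _ \<rho>] conjI allI ballI impI)
    show "\<rho> > 0" by fact
    fix h :: real assume "h \<noteq> 0 \<and> dist h 0 < \<rho>"
    then have h: "h \<noteq> 0" "\<bar>h\<bar> < \<rho>" by auto
    have "norm (G h / h) = \<bar>G h\<bar> / \<bar>h\<bar>" by (simp add: abs_divide)
    also have "\<dots> \<le> M * \<bar>h\<bar> powr e / \<bar>h\<bar>" by (rule divide_right_mono[OF M[OF h]]) simp
    also have "\<dots> = M * \<bar>h\<bar> powr (e - 1)" using h by (simp add: powr_diff)
    finally show "norm (G h / h) \<le> M * \<bar>h\<bar> powr (e - 1)" .
  qed
  have "((\<lambda>h::real. \<bar>h\<bar> powr (e - 1)) \<longlongrightarrow> 0) (at 0)"
    by (rule tendsto_zero_powrI) (auto intro!: tendsto_eq_intros simp: e)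
  then show "((\<lambda>h. M * \<bar>h\<bar> powr (e - 1)) \<longlongrightarrow> 0) (at 0)"
    by (rule tendsto_mult_right_zero)
qed

lemma growth_partials_zero:
  assumes "\<rho> > 0" "\<forall>z\<in>ball a \<rho> - {a}. \<bar>g z\<bar> \<le> M * dist z a powr e" "e > 1" "g a = 0"
  shows "((\<lambda>t. g (t, snd a)) has_real_derivative 0) (at (fst a))"
    and "((\<lambda>t. g (fst a, t)) has_real_derivative 0) (at (snd a))"
proof -
  have "((\<lambda>h. g (fst a + h, snd a) / h) \<longlongrightarrow> 0) (at 0)"
  proof (rule tendsto_quotient_zero[OF assms(1) _ assms(3)])
    fix h :: real assume h: "h \<noteq> 0" "\<bar>h\<bar> < \<rho>"
    have "(fst a + h, snd a) \<in> ball a \<rho> - {a}" using h dist_horizontal[of a h]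
      by (auto simp: dist_commute prod_eq_iff)
    then have "\<bar>g (fst a + h, snd a)\<bar> \<le> M * dist (fst a + h, snd a) a powr e" using assms(2) by blast
    then show "\<bar>g (fst a + h, snd a)\<bar> \<le> M * \<bar>h\<bar> powr e" using dist_horizontal[of a h] by simp
  qed
  then show "((\<lambda>t. g (t, snd a)) has_real_derivative 0) (at (fst a))"
    unfolding DERIV_def using assms(4) by (cases a) simp
  have "((\<lambda>h. g (fst a, snd a + h) / h) \<longlongrightarrow> 0) (at 0)"
  proof (rule tendsto_quotient_zero[OF assms(1) _ assms(3)])
    fix h :: real assume h: "h \<noteq> 0" "\<bar>h\<bar> < \<rho>"
    have "(fst a, snd a + h) \<in> ball a \<rho> - {a}" using h dist_vertical[of a h]
      by (auto simp: dist_commute prod_eq_iff)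
    then have "\<bar>g (fst a, snd a + h)\<bar> \<le> M * dist (fst a, snd a + h) a powr e" using assms(2) by blast
    then show "\<bar>g (fst a, snd a + h)\<bar> \<le> M * \<bar>h\<bar> powr e" using dist_vertical[of a h] by simp
  qed
  then show "((\<lambda>t. g (fst a, t)) has_real_derivative 0) (at (snd a))"
    unfolding DERIV_def using assms(4) by (cases a) simp
qed

lemma growth_isCont:
  assumes "\<rho> > 0" "\<forall>z\<in>ball a \<rho> - {a}. \<bar>g z\<bar> \<le> M * dist z a powr e" "e > 0" "g a = 0"
  shows "isCont g a"
  unfolding isCont_def assms(4)
proof (rule Lim_null_comparison)
  show "\<forall>\<^sub>F z in at a. norm (g z) \<le> M * dist z a powr e"
    unfolding eventually_at using assms(1,2) by (intro exI[of _ \<rho>]) (auto simp: dist_commute)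
  have "((\<lambda>z. dist z a) \<longlongrightarrow> 0) (at a)"
    using tendsto_dist[OF tendsto_ident_at tendsto_const, of a a UNIV] by simp
  then have "((\<lambda>z. dist z a powr e) \<longlongrightarrow> 0) (at a)"
    by (rule tendsto_zero_powrI) (auto simp: assms(3))
  then show "((\<lambda>z. M * dist z a powr e) \<longlongrightarrow> 0) (at a)"
    by (rule tendsto_mult_right_zero)
qed

lemma growth_continuous:
  assumes "\<rho> > 0" "smooth_on n (ball a \<rho> - {a}) g" "growth n (ball a \<rho> - {a}) a e g" "e > 0" "g a = 0"
  shows "continuous_on (ball a \<rho>) g"
  unfolding continuous_on_eq_continuous_at[OF open_ball]
proof
  fix x assume x: "x \<in> ball a \<rho>"
  show "isCont g x"
  proof (cases "x = a")
    case True
    obtain M where "\<forall>z\<in>ball a \<rho> - {a}. \<bar>g z\<bar> \<le> M * dist z a powr e" using growth_0D[OF assms(3)] by auto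
    then show ?thesis using growth_isCont[of \<rho> a g M e] assms(1,4,5) True by blast
  next
    case False
    then have "x \<in> ball a \<rho> - {a}" using x by auto
    then show ?thesis using has_derivative_continuous[OF smooth_on_has_derivative[OF assms(2)]] by blast
  qed
qed

lemma growth_imp_flat:
  assumes "\<rho> > 0"
  shows "smooth_on k (ball a \<rho> - {a}) g \<Longrightarrow> growth k (ball a \<rho> - {a}) a e g \<Longrightarrow> e \<ge> real k + 1 \<Longrightarrow> g a = 0 \<Longrightarrow>
    Ck_on k (ball a \<rho>) g \<and> (\<forall>is. length is \<le> k \<longrightarrow> pds is g a = 0)"
proof (induction k arbitrary: g e)
  case 0
  have "continuous_on (ball a \<rho>) g" by (rule growth_continuous[OF assms 0(1,2)]) (use 0 in auto)
  then show ?case using 0 by simp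
next
  case (Suc k)
  let ?V = "ball a \<rho> - {a}"
  have cont: "continuous_on (ball a \<rho>) g" by (rule growth_continuous[OF assms Suc(2,3)]) (use Suc in auto)
  obtain M where M: "\<forall>z\<in>?V. \<bar>g z\<bar> \<le> M * dist z a powr e" using growth_0D[OF Suc(3)] by auto
  have e1: "e > 1" using Suc(4) by simp
  note D = growth_partials_zero[OF assms M e1 Suc(5)]
  have pda: "pd i g a = 0" "pdiff_at i g a" for i
    using D by (auto simp: pd_eq pdiff_at_def DERIV_imp_deriv has_field_derivative_def intro: differentiableI)
  have IH: "Ck_on k (ball a \<rho>) (pd i g) \<and> (\<forall>is. length is \<le> k \<longrightarrow> pds is (pd i g) a = 0)" for i
    by (rule Suc.IH[OF smooth_on_pd[OF Suc(2)] growth_pd[OF Suc(3)]]) (use Suc(4) pda in auto)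
  have pdz: "pdiff_at i g z" if "z \<in> ball a \<rho>" for i z
  proof (cases "z = a")
    case True then show ?thesis using pda by simp
  next
    case False then have "z \<in> ?V" using that by auto
    then show ?thesis using pd_of_has_derivative(2)[OF smooth_on_has_derivative[OF Suc(2)]] by blast
  qed
  have pds0: "pds is g a = 0" if "length is \<le> Suc k" for "is"
  proof (cases "is" rule: rev_exhaust)
    case Nil then show ?thesis using Suc(5) by simp
  next
    case (snoc ys i)
    then show ?thesis using IH[of i] that by (simp add: pds_snoc)
  qed
  show ?case using cont IH pdz pds0 by simp
qed

lemma compact_continuous_bounded: "compact K \<Longrightarrow> continuous_on K h \<Longrightarrow> \<exists>B. \<forall>z\<in>K. \<bar>h z :: real\<bar> \<le> B"
proof -
  assume "compact K" "continuous_on K h"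
  then have "bounded (h ` K)" by (intro compact_imp_bounded compact_continuous_image)
  then show ?thesis unfolding bounded_iff by auto
qed

lemma smooth_on_cont: "smooth_on n W h \<Longrightarrow> K \<subseteq> W \<Longrightarrow> continuous_on K h"
proof -
  assume a: "smooth_on n W h" "K \<subseteq> W"
  have "\<forall>x\<in>K. isCont h x"
  proof
    fix x assume "x \<in> K" then have "x \<in> W" using a(2) by blast
    then show "isCont h x" by (rule has_derivative_continuous[OF smooth_on_has_derivative[OF a(1)]])
  qed
  then show ?thesis by (rule continuous_at_imp_continuous_on)
qed

lemma onorm_linear2: "onorm (\<lambda>v::real\<times>real. fst v * A + snd v * B) \<le> \<bar>A\<bar> + \<bar>B\<bar>"
proof (rule onorm_le)
  fix v :: "real \<times> real"
  have "norm (fst v * A + snd v * B) \<le> \<bar>fst v\<bar> * \<bar>A\<bar> + \<bar>snd v\<bar> * \<bar>B\<bar>"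
    by (simp add: abs_mult[symmetric] abs_triangle_ineq)
  also have "\<dots> \<le> norm v * \<bar>A\<bar> + norm v * \<bar>B\<bar>"
    by (intro add_mono mult_right_mono) (use norm_fst_le[of "fst v" "snd v"] norm_snd_le[of "snd v" "fst v"] in simp_all)
  finally show "norm (fst v * A + snd v * B) \<le> (\<bar>A\<bar> + \<bar>B\<bar>) * norm v" by (simp add: algebra_simps)
qed

lemma smooth_on_lipschitz:
  assumes "smooth_on (Suc 0) W f" "convex K" "compact K" "K \<subseteq> W" "open W"
  shows "\<exists>L. \<forall>x\<in>K. \<forall>y\<in>K. \<bar>f x - f y\<bar> \<le> L * dist x y"
proof -
  have c0: "continuous_on K (pd 0 f)" "continuous_on K (pd 1 f)"
    using smooth_on_cont[OF smooth_on_pd[OF assms(1)] assms(4)] by auto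
  obtain B0 where B0: "\<forall>z\<in>K. \<bar>pd 0 f z\<bar> \<le> B0" using compact_continuous_bounded[OF assms(3) c0(1)] by blast
  obtain B1 where B1: "\<forall>z\<in>K. \<bar>pd 1 f z\<bar> \<le> B1" using compact_continuous_bounded[OF assms(3) c0(2)] by blast
  have "\<forall>x\<in>K. \<forall>y\<in>K. norm (f x - f y) \<le> (B0 + B1) * norm (x - y)"
  proof (intro ballI)
    fix x y assume xy: "x \<in> K" "y \<in> K"
    show "norm (f x - f y) \<le> (B0 + B1) * norm (x - y)"
    proof (rule differentiable_bound[OF assms(2) _ _ xy])
      fix z assume z: "z \<in> K"
      show "(f has_derivative (\<lambda>v. fst v * pd 0 f z + snd v * pd 1 f z)) (at z within K)"
        using smooth_on_has_derivative[OF assms(1)] z assms(4) by (blast intro: has_derivative_at_withinI)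
      show "onorm (\<lambda>v. fst v * pd 0 f z + snd v * pd 1 f z) \<le> B0 + B1"
        using onorm_linear2[of "pd 0 f z" "pd 1 f z"] B0 B1 z by fastforce
    qed
  qed
  then show ?thesis by (auto simp: dist_norm)
qed

lemma bounded_imp_powr_bound:
  assumes "r > 0" and B: "\<forall>z\<in>ball a r - {a}. \<bar>h z\<bar> \<le> B" and s: "s \<ge> 1"
  shows "\<exists>M. \<forall>z\<in>ball a r - {a}. \<bar>h z\<bar> \<le> M * dist z a powr (1 - s)"
proof (intro exI[of _ "max B 0 * r powr (s - 1)"] ballI)
  fix z assume z: "z \<in> ball a r - {a}"
  then have d: "0 < dist z a" "dist z a \<le> r" by (auto simp: dist_commute)
  have "r powr (1 - s) \<le> dist z a powr (1 - s)"
    by (rule powr_mono2'[OF _ d]) (use s in simp)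
  then have "max B 0 * (r powr (s - 1) * r powr (1 - s)) \<le> max B 0 * (r powr (s - 1) * dist z a powr (1 - s))"
    by (intro mult_left_mono) auto
  moreover have "r powr (s - 1) * r powr (1 - s) = 1"
    using assms(1) by (simp add: powr_add[symmetric])
  ultimately have "max B 0 \<le> max B 0 * r powr (s - 1) * dist z a powr (1 - s)" by (simp add: mult.assoc)
  moreover have "\<bar>h z\<bar> \<le> B" using B z by auto
  ultimately show "\<bar>h z\<bar> \<le> max B 0 * r powr (s - 1) * dist z a powr (1 - s)" by linarith
qed

text \<open>At a zero a where f is smooth, f has growth exponent 1: f itself is Lipschitz, hence
  O(|z - a|), and its derivatives are bounded.\<close>

lemma regular_point_growth:
  assumes "\<rho> > 0" "smooth_on (Suc n) (ball a \<rho>) f" "f a = 0"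
  shows "growth n (ball a (\<rho>/2) - {a}) a 1 f"
proof (rule growth_of_pds)
  fix "is" :: "nat list" assume len: "length is \<le> n"
  let ?K = "cball a (\<rho>/2)"
  have K: "?K \<subseteq> ball a \<rho>" using assms(1) by auto
  show "\<exists>M. \<forall>z\<in>ball a (\<rho>/2) - {a}. \<bar>pds is f z\<bar> \<le> M * dist z a powr (1 - real (length is))"
  proof (cases "is")
    case Nil
    have "smooth_on (Suc 0) (ball a \<rho>) f" by (rule smooth_on_le[OF _ assms(2)]) simp
    then obtain L where L: "\<forall>x\<in>?K. \<forall>y\<in>?K. \<bar>f x - f y\<bar> \<le> L * dist x y"
      using smooth_on_lipschitz[OF _ convex_cball compact_cball K open_ball] by blast
    have "\<bar>f z\<bar> \<le> L * dist z a" if "z \<in> ball a (\<rho>/2) - {a}" for z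
    proof -
      have "z \<in> ?K" "a \<in> ?K" using that assms(1) by auto
      then show ?thesis using L assms(3) by fastforce
    qed
    then show ?thesis using Nil by (intro exI[of _ L]) auto
  next
    case (Cons i js)
    have "smooth_on (Suc n - length is) (ball a \<rho>) (pds is f)" using smooth_on_pds[OF assms(2)] len by simp
    then have "continuous_on ?K (pds is f)" using smooth_on_cont K by blast
    then obtain B where "\<forall>z\<in>?K. \<bar>pds is f z\<bar> \<le> B" using compact_continuous_bounded[OF compact_cball] by blast
    then have B: "\<forall>z\<in>ball a (\<rho>/2) - {a}. \<bar>pds is f z\<bar> \<le> B" by auto
    show ?thesis by (rule bounded_imp_powr_bound[OF _ B]) (use assms(1) Cons in auto)
  qed
qed

text \<open>Over the chart (x,t) \<mapsto> (x, x t), a point z with first coordinate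
  x \<noteq> 0 corresponds to (x, y/x).  chart_domain N is the set of points of the plane whose
  preimage lies in N.\<close>

definition chart_domain :: "(real \<times> real) set \<Rightarrow> (real \<times> real) set" where
  "chart_domain N = {z. fst z \<noteq> 0 \<and> (fst z, snd z / fst z) \<in> N}"

lemma open_chart_domain:
  assumes "open N" shows "open (chart_domain N)"
proof -
  let ?S = "{z::real\<times>real. fst z \<noteq> 0}"
  have oS: "open ?S" by (intro open_Collect_neq continuous_on_fst continuous_on_id continuous_on_const)
  have "continuous_on ?S (\<lambda>z. (fst z, snd z / fst z))"
    by (intro continuous_on_Pair continuous_on_fst continuous_on_snd continuous_on_id continuous_on_divide) auto
  then have "open ((\<lambda>z. (fst z, snd z / fst z)) -` N \<inter> ?S)"
    using continuous_on_open_vimage[OF oS] assms by blast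
  moreover have "(\<lambda>z. (fst z, snd z / fst z)) -` N \<inter> ?S = chart_domain N" by (auto simp: chart_domain_def)
  ultimately show ?thesis by simp
qed

lemma DERIV_along_curve:
  assumes dH: "\<And>z. (H has_derivative (\<lambda>v. fst v * Hu z + snd v * Hw z)) (at z)"
    and g1: "(g1 has_real_derivative d1) (at t)" and g2: "(g2 has_real_derivative d2) (at t)"
  shows "((\<lambda>t. H (g1 t, g2 t)) has_real_derivative (d1 * Hu (g1 t, g2 t) + d2 * Hw (g1 t, g2 t))) (at t)"
proof -
  have P: "((\<lambda>t. (g1 t, g2 t)) has_derivative (\<lambda>h. (d1 * h, d2 * h))) (at t)"
    by (rule has_derivative_Pair[OF has_field_derivative_imp_has_derivative[OF g1] has_field_derivative_imp_has_derivative[OF g2]])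
  have "((H \<circ> (\<lambda>t. (g1 t, g2 t))) has_derivative ((\<lambda>v. fst v * Hu (g1 t, g2 t) + snd v * Hw (g1 t, g2 t)) \<circ> (\<lambda>h. (d1 * h, d2 * h)))) (at t)"
    by (rule diff_chain_at[OF P dH])
  then have "((\<lambda>t. H (g1 t, g2 t)) has_derivative (\<lambda>h. d1 * h * Hu (g1 t, g2 t) + d2 * h * Hw (g1 t, g2 t))) (at t)"
    by (simp add: o_def)
  then show ?thesis unfolding has_field_derivative_def
    by (rule has_derivative_eq_rhs) (simp add: fun_eq_iff algebra_simps)
qed

lemma chart_dx_algebra:
  fixes x w y h hu hw q qu qw :: real
  assumes "x \<noteq> 0" "q \<noteq> 0" "y = x * w"
  shows "((1 * hu + (- (y / x\<^sup>2)) * hw) * (x ^ s * q ^ n) - h * (of_nat s * (1 * x ^ (s - Suc 0)) * q ^ n + of_nat n * ((1 * qu + (- (y / x\<^sup>2)) * qw) * q ^ (n - Suc 0)) * x ^ s))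
     / ((x ^ s * q ^ n) * (x ^ s * q ^ n))
   = ((- real s * h + x * hu - w * hw) * q - real n * h * (x * qu - w * qw)) / (x ^ Suc s * q ^ Suc n)"
  using assms by (cases s; cases n) (simp_all add: field_simps power2_eq_square)

lemma chart_dy_algebra:
  fixes x w h hu hw q qu qw :: real
  assumes "x \<noteq> 0" "q \<noteq> 0"
  shows "((0 * hu + (1 / x) * hw) * (x ^ s * q ^ n) - h * (0 * q ^ n + of_nat n * ((0 * qu + (1 / x) * qw) * q ^ (n - Suc 0)) * x ^ s))
     / ((x ^ s * q ^ n) * (x ^ s * q ^ n))
   = (hw * q - real n * h * qw) / (x ^ Suc s * q ^ Suc n)"
  using assms by (cases n) (simp_all add: field_simps power2_eq_square)

lemma chart_dx_deriv:
  assumes dH: "\<And>z. (H has_derivative (\<lambda>v. fst v * Hu z + snd v * Hw z)) (at z)"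
    and dQ: "\<And>z. (Q has_derivative (\<lambda>v. fst v * Qu z + snd v * Qw z)) (at z)"
    and x: "x \<noteq> 0" and q: "Q (x, y/x) \<noteq> 0"
  shows "((\<lambda>t. H (t, y/t) / (t^s * Q (t, y/t)^n)) has_real_derivative
    (((- real s * H (x, y/x) + x * Hu (x,y/x) - (y/x) * Hw (x,y/x)) * Q (x,y/x) - real n * H (x,y/x) * (x * Qu (x,y/x) - (y/x) * Qw (x,y/x)))
      / (x^(Suc s) * Q (x, y/x)^(Suc n)))) (at x)"
proof -
  have g2: "((\<lambda>t. y / t) has_real_derivative (- (y / x\<^sup>2))) (at x)"
    using DERIV_divide[OF DERIV_const[of y] DERIV_ident, of x UNIV] x by (simp add: power2_eq_square)
  have hH: "((\<lambda>t. H (t, y/t)) has_real_derivative (1 * Hu (x, y/x) + (- (y / x\<^sup>2)) * Hw (x, y/x))) (at x)"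
    by (rule DERIV_along_curve[OF dH DERIV_ident g2])
  have hQ: "((\<lambda>t. Q (t, y/t)) has_real_derivative (1 * Qu (x, y/x) + (- (y / x\<^sup>2)) * Qw (x, y/x))) (at x)"
    by (rule DERIV_along_curve[OF dQ DERIV_ident g2])
  have hD: "((\<lambda>t. t^s * Q (t, y/t)^n) has_real_derivative (of_nat s * (1 * x ^ (s - Suc 0)) * Q (x, y/x) ^ n
      + of_nat n * ((1 * Qu (x, y/x) + (- (y / x\<^sup>2)) * Qw (x, y/x)) * Q (x, y/x) ^ (n - Suc 0)) * x ^ s)) (at x)"
    by (rule DERIV_mult[OF DERIV_power[OF DERIV_ident] DERIV_power[OF hQ]])
  have den: "x^s * Q (x, y/x)^n \<noteq> 0" using x q by simp
  show ?thesis
    by (rule DERIV_cong[OF DERIV_divide[OF hH hD den]]) (rule chart_dx_algebra, use x q in simp_all)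
qed

lemma chart_dy_deriv:
  assumes dH: "\<And>z. (H has_derivative (\<lambda>v. fst v * Hu z + snd v * Hw z)) (at z)"
    and dQ: "\<And>z. (Q has_derivative (\<lambda>v. fst v * Qu z + snd v * Qw z)) (at z)"
    and x: "x \<noteq> 0" and q: "Q (x, y/x) \<noteq> 0"
  shows "((\<lambda>t. H (x, t/x) / (x^s * Q (x, t/x)^n)) has_real_derivative
    ((Hw (x, y/x) * Q (x, y/x) - real n * H (x, y/x) * Qw (x, y/x)) / (x^(Suc s) * Q (x, y/x)^(Suc n)))) (at y)"
proof -
  have g2: "((\<lambda>t. t / x) has_real_derivative (1 / x)) (at y)"
    by (rule DERIV_cong[OF DERIV_cdivide[OF DERIV_ident]]) simp
  have hH: "((\<lambda>t. H (x, t/x)) has_real_derivative (0 * Hu (x, y/x) + (1 / x) * Hw (x, y/x))) (at y)"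
    by (rule DERIV_along_curve[OF dH DERIV_const g2])
  have hQ: "((\<lambda>t. Q (x, t/x)) has_real_derivative (0 * Qu (x, y/x) + (1 / x) * Qw (x, y/x))) (at y)"
    by (rule DERIV_along_curve[OF dQ DERIV_const g2])
  have hD: "((\<lambda>t. x^s * Q (x, t/x)^n) has_real_derivative (0 * Q (x, y/x) ^ n
      + of_nat n * ((0 * Qu (x, y/x) + (1 / x) * Qw (x, y/x)) * Q (x, y/x) ^ (n - Suc 0)) * x ^ s)) (at y)"
    by (rule DERIV_mult[OF DERIV_const DERIV_power[OF hQ]])
  have den: "x^s * Q (x, y/x)^n \<noteq> 0" using x q by simp
  show ?thesis
    by (rule DERIV_cong[OF DERIV_divide[OF hH hD den]]) (rule chart_dy_algebra, use x q in simp_all)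
qed

lemma divisor_vanishing_pd:
  fixes H :: "real \<times> real \<Rightarrow> real" and w :: real
  assumes dH: "(H has_derivative (\<lambda>v. fst v * Hu + snd v * Hw)) (at (0, w))"
    and N: "open N" "(0, w) \<in> N" and H0: "\<forall>w'. (0, w') \<in> N \<longrightarrow> H (0, w') = 0"
  shows "Hw = 0"
proof -
  have d1: "((\<lambda>t. H (0, t)) has_real_derivative Hw) (at w)"
    using partials_of_has_derivative(2)[OF dH] by simp
  have d2: "((\<lambda>t. H (0, t)) has_real_derivative 0) (at w)"
    by (rule has_field_derivative_transform_within_open[OF DERIV_const open_vertical_slice[OF N(1)]])
      (use N(2) H0 in auto)
  show ?thesis using DERIV_unique[OF d1 d2] .
qed

definition chart_fraction ::
    "(real \<times> real \<Rightarrow> real) \<Rightarrow> (real \<times> real \<Rightarrow> real) \<Rightarrow> nat \<Rightarrow> nat \<Rightarrow> real \<times> real \<Rightarrow> real" where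
  "chart_fraction H Q s n z = H (fst z, snd z / fst z) / (fst z ^ s * Q (fst z, snd z / fst z) ^ n)"

lemma chart_fraction_pd_x:
  assumes polys: "poly2 H" "poly2 Hu" "poly2 Hw" "poly2 Q" "poly2 Qu" "poly2 Qw"
    and dH: "\<And>z. (H has_derivative (\<lambda>v. fst v * Hu z + snd v * Hw z)) (at z)"
    and dQ: "\<And>z. (Q has_derivative (\<lambda>v. fst v * Qu z + snd v * Qw z)) (at z)"
    and N: "\<forall>p\<in>N. Q p \<noteq> 0" and H0: "\<forall>w. (0, w) \<in> N \<longrightarrow> H (0, w) = 0 \<and> Hw (0, w) = 0"
  shows "\<exists>H'. poly2 H' \<and> (\<forall>w. (0, w) \<in> N \<longrightarrow> H' (0, w) = 0) \<and>
           (\<forall>z\<in>chart_domain N. pd 0 (chart_fraction H Q s n) z = chart_fraction H' Q (Suc s) (Suc n) z)"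
proof (intro exI conjI)
  define H' where "H' = (\<lambda>p. (- real s * H p + fst p * Hu p - snd p * Hw p) * Q p
                            - real n * H p * (fst p * Qu p - snd p * Qw p))"
  show "poly2 H'" unfolding H'_def
    by (intro poly2_diff poly2.padd poly2.pmult poly2.pconst poly2.pfst poly2.psnd polys)
  show "\<forall>w. (0, w) \<in> N \<longrightarrow> H' (0, w) = 0" using H0 by (simp add: H'_def)
  show "\<forall>z\<in>chart_domain N. pd 0 (chart_fraction H Q s n) z = chart_fraction H' Q (Suc s) (Suc n) z"
  proof
    fix z assume "z \<in> chart_domain N"
    moreover obtain x y where xy: "z = (x, y)" by (cases z)
    ultimately have x: "x \<noteq> 0" and q: "Q (x, y/x) \<noteq> 0" using N by (auto simp: chart_domain_def)
    show "pd 0 (chart_fraction H Q s n) z = chart_fraction H' Q (Suc s) (Suc n) z"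
      using DERIV_imp_deriv[OF chart_dx_deriv[OF dH dQ x q, of s n]]
      by (simp add: xy pd_eq chart_fraction_def H'_def)
  qed
qed

lemma chart_fraction_pd_y:
  assumes polys: "poly2 H" "poly2 Hw" "poly2 Q" "poly2 Qw"
    and dH: "\<And>z. (H has_derivative (\<lambda>v. fst v * Hu z + snd v * Hw z)) (at z)"
    and dQ: "\<And>z. (Q has_derivative (\<lambda>v. fst v * Qu z + snd v * Qw z)) (at z)"
    and N: "\<forall>p\<in>N. Q p \<noteq> 0" and H0: "\<forall>w. (0, w) \<in> N \<longrightarrow> H (0, w) = 0 \<and> Hw (0, w) = 0"
  shows "\<exists>H'. poly2 H' \<and> (\<forall>w. (0, w) \<in> N \<longrightarrow> H' (0, w) = 0) \<and>
           (\<forall>z\<in>chart_domain N. pd 1 (chart_fraction H Q s n) z = chart_fraction H' Q (Suc s) (Suc n) z)"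
proof (intro exI conjI)
  define H' where "H' = (\<lambda>p. Hw p * Q p - real n * H p * Qw p)"
  show "poly2 H'" unfolding H'_def by (intro poly2_diff poly2.pmult poly2.pconst polys)
  show "\<forall>w. (0, w) \<in> N \<longrightarrow> H' (0, w) = 0" using H0 by (simp add: H'_def)
  show "\<forall>z\<in>chart_domain N. pd 1 (chart_fraction H Q s n) z = chart_fraction H' Q (Suc s) (Suc n) z"
  proof
    fix z assume "z \<in> chart_domain N"
    moreover obtain x y where xy: "z = (x, y)" by (cases z)
    ultimately have x: "x \<noteq> 0" and q: "Q (x, y/x) \<noteq> 0" using N by (auto simp: chart_domain_def)
    show "pd 1 (chart_fraction H Q s n) z = chart_fraction H' Q (Suc s) (Suc n) z"
      using DERIV_imp_deriv[OF chart_dy_deriv[OF dH dQ x q, of s n]]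
      by (simp add: xy pd_eq chart_fraction_def H'_def)
  qed
qed

text \<open>Differentiation preserves this shape, raising s by
  one; so every derivative of order j of f has it with s = j.\<close>

definition chart_quotient ::
    "(real \<times> real \<Rightarrow> real) \<Rightarrow> (real \<times> real) set \<Rightarrow> nat \<Rightarrow> (real \<times> real \<Rightarrow> real) \<Rightarrow> bool" where
  "chart_quotient Q N s g \<longleftrightarrow> (\<exists>H n. poly2 H \<and> (\<forall>w. (0, w) \<in> N \<longrightarrow> H (0, w) = 0) \<and>
     (\<forall>z\<in>chart_domain N. g z = chart_fraction H Q s n z))"

lemma chart_quotient_pd:
  assumes Q: "poly2 Q" and N: "open N" "\<forall>p\<in>N. Q p \<noteq> 0" and g: "chart_quotient Q N s g"
  shows "chart_quotient Q N (Suc s) (pd i g)"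
proof -
  obtain H n where H: "poly2 H" "\<forall>w. (0, w) \<in> N \<longrightarrow> H (0, w) = 0"
      "\<forall>z\<in>chart_domain N. g z = chart_fraction H Q s n z"
    using g unfolding chart_quotient_def by blast
  obtain Hu Hw where dH: "poly2 Hu" "poly2 Hw" "\<And>z. (H has_derivative (\<lambda>v. fst v * Hu z + snd v * Hw z)) (at z)"
    using poly2_has_derivative[OF H(1)] by blast
  obtain Qu Qw where dQ: "poly2 Qu" "poly2 Qw" "\<And>z. (Q has_derivative (\<lambda>v. fst v * Qu z + snd v * Qw z)) (at z)"
    using poly2_has_derivative[OF Q] by blast
  have H0: "\<forall>w. (0, w) \<in> N \<longrightarrow> H (0, w) = 0 \<and> Hw (0, w) = 0"
    using divisor_vanishing_pd[OF dH(3) N(1) _ H(2)] H(2) by blast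
  have "\<exists>H'. poly2 H' \<and> (\<forall>w. (0, w) \<in> N \<longrightarrow> H' (0, w) = 0) \<and>
          (\<forall>z\<in>chart_domain N. pd i (chart_fraction H Q s n) z = chart_fraction H' Q (Suc s) (Suc n) z)"
  proof (cases "i = 0")
    case True
    then show ?thesis using chart_fraction_pd_x[OF H(1) dH(1,2) Q dQ(1,2) dH(3) dQ(3) N(2) H0] by simp
  next
    case False
    then show ?thesis using chart_fraction_pd_y[OF H(1) dH(2) Q dQ(2) dH(3) dQ(3) N(2) H0] by (simp add: pd_nonzero_index[OF False])
  qed
  then obtain H' where H': "poly2 H'" "\<forall>w. (0, w) \<in> N \<longrightarrow> H' (0, w) = 0"
      "\<forall>z\<in>chart_domain N. pd i (chart_fraction H Q s n) z = chart_fraction H' Q (Suc s) (Suc n) z"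
    by blast
  have "pd i g z = pd i (chart_fraction H Q s n) z" if "z \<in> chart_domain N" for z
    by (rule pd_local[OF open_chart_domain[OF N(1)] that]) (use H(3) in simp)
  then have "\<forall>z\<in>chart_domain N. pd i g z = chart_fraction H' Q (Suc s) (Suc n) z" using H'(3) by simp
  then show ?thesis using H'(1,2) unfolding chart_quotient_def by blast
qed

lemma chart_quotient_pds:
  assumes "poly2 Q" "open N" "\<forall>p\<in>N. Q p \<noteq> 0" "chart_quotient Q N 0 g"
  shows "chart_quotient Q N (length is) (pds is g)"
proof (induction "is")
  case Nil then show ?case using assms(4) by simp
next
  case (Cons i "is") then show ?case using chart_quotient_pd[OF assms(1-3)] by simp
qed

text \<open>A polynomial vanishing on the divisor is O(|x|) on a closed ball (it is Lipschitz there),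
  so a chart quotient with exponent s is O(|x|^(1 - s)) on the chart domain of that ball.\<close>

lemma dist_axis_projection:
  fixes v :: real and p :: "real \<times> real"
  shows "dist (0, v) (0, snd p) \<le> dist (0, v) p"
proof (cases p)
  case (Pair u w)
  have "sqrt ((dist 0 0)\<^sup>2 + (dist v w)\<^sup>2) \<le> sqrt ((dist 0 u)\<^sup>2 + (dist v w)\<^sup>2)"
    by (rule real_sqrt_le_mono) simp
  then show ?thesis using Pair by (simp add: dist_Pair_Pair)
qed

lemma dist_to_axis: "dist p (0::real, snd p) = \<bar>fst p\<bar>"
  by (cases p) (simp add: dist_Pair_Pair dist_real_def)

lemma poly2_divisor_bound:
  fixes v \<delta> :: real
  assumes H: "poly2 H" and H0: "\<forall>w. (0, w) \<in> cball (0, v) \<delta> \<longrightarrow> H (0, w) = 0"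
  shows "\<exists>L. \<forall>p\<in>cball (0, v) \<delta>. \<bar>H p\<bar> \<le> L * \<bar>fst p\<bar>"
proof -
  obtain L where L: "\<forall>p\<in>cball (0, v) \<delta>. \<forall>p'\<in>cball (0, v) \<delta>. \<bar>H p - H p'\<bar> \<le> L * dist p p'"
    using smooth_on_lipschitz[OF smooth_on_poly[OF H] convex_cball compact_cball subset_UNIV open_UNIV] by blast
  have "\<bar>H p\<bar> \<le> L * \<bar>fst p\<bar>" if p: "p \<in> cball (0, v) \<delta>" for p
  proof -
    have q: "(0, snd p) \<in> cball (0, v) \<delta>" using order_trans[OF dist_axis_projection[of v p]] p by simp
    then have "H (0, snd p) = 0" using H0 by blast
    then show ?thesis using L p q dist_to_axis[of p] by fastforce
  qed
  then show ?thesis by blast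
qed

lemma chart_quotient_growth:
  assumes Q: "poly2 Q" and N: "\<forall>p\<in>N. Q p \<noteq> 0" and K: "cball (0, v) \<delta> \<subseteq> N"
    and g: "chart_quotient Q N s g"
  shows "\<exists>M. \<forall>z\<in>chart_domain (cball (0, v) \<delta>). \<bar>g z\<bar> \<le> M * \<bar>fst z\<bar> powr (1 - real s)"
proof -
  let ?K = "cball (0::real, v) \<delta>"
  obtain H n where H: "poly2 H" "\<forall>w. (0, w) \<in> N \<longrightarrow> H (0, w) = 0"
      "\<forall>z\<in>chart_domain N. g z = chart_fraction H Q s n z"
    using g unfolding chart_quotient_def by blast
  have "\<forall>w. (0, w) \<in> ?K \<longrightarrow> H (0, w) = 0" using H(2) K by blast
  then obtain L where L: "\<forall>p\<in>?K. \<bar>H p\<bar> \<le> L * \<bar>fst p\<bar>" using poly2_divisor_bound[OF H(1)] by blast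
  have "continuous_on ?K (\<lambda>p. inverse (Q p))"
    by (rule continuous_on_inverse[OF poly2_continuous[OF Q]]) (use K N in auto)
  then obtain B where B: "\<forall>p\<in>?K. \<bar>inverse (Q p)\<bar> \<le> B"
    using compact_continuous_bounded[OF compact_cball] by blast
  have "\<bar>g z\<bar> \<le> (L * B ^ n) * \<bar>fst z\<bar> powr (1 - real s)" if "z \<in> chart_domain ?K" for z
  proof -
    obtain x y where xy: "z = (x, y)" by (cases z)
    have z: "(x, y) \<in> chart_domain ?K" using that xy by simp
    have x: "x \<noteq> 0" and pK: "(x, y/x) \<in> ?K" using z by (auto simp: chart_domain_def)
    have zN: "(x, y) \<in> chart_domain N" and q: "Q (x, y/x) \<noteq> 0" using x pK K N by (auto simp: chart_domain_def)
    have "\<bar>g (x, y)\<bar> = \<bar>H (x, y/x)\<bar> * \<bar>inverse (Q (x, y/x))\<bar> ^ n / \<bar>x\<bar> ^ s"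
      using H(3) zN x q by (simp add: chart_fraction_def abs_mult abs_divide power_abs abs_inverse divide_inverse power_inverse mult_ac)
    also have "\<dots> \<le> (L * \<bar>x\<bar>) * B ^ n / \<bar>x\<bar> ^ s"
    proof (rule divide_right_mono)
      have h1: "\<bar>H (x, y/x)\<bar> \<le> L * \<bar>x\<bar>" using L pK by fastforce
      have h2: "\<bar>inverse (Q (x, y/x))\<bar> ^ n \<le> B ^ n" using B pK by (intro power_mono) auto
      show "\<bar>H (x, y/x)\<bar> * \<bar>inverse (Q (x, y/x))\<bar> ^ n \<le> (L * \<bar>x\<bar>) * B ^ n"
        by (rule mult_mono[OF h1 h2]) (use h1 in auto)
    qed simp
    also have "\<dots> = (L * B ^ n) * \<bar>x\<bar> powr (1 - real s)"
      using x by (simp add: powr_diff powr_realpow)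
    finally show ?thesis using xy by simp
  qed
  then show ?thesis by blast
qed

definition chart_growth :: "(real \<times> real \<Rightarrow> real) \<Rightarrow> (real \<times> real) set \<Rightarrow> bool" where
  "chart_growth f B \<longleftrightarrow>
     (\<forall>is. \<exists>M. \<forall>z\<in>chart_domain B. \<bar>pds is f z\<bar> \<le> M * \<bar>fst z\<bar> powr (1 - real (length is)))"

lemma chart_growth_mono:
  assumes "A \<subseteq> B" "chart_growth f B" shows "chart_growth f A"
proof -
  have "chart_domain A \<subseteq> chart_domain B" using assms(1) by (auto simp: chart_domain_def)
  then show ?thesis using assms(2) unfolding chart_growth_def by blast
qed

lemma chart_growth_Un:
  assumes A: "chart_growth f A" and B: "chart_growth f B"
  shows "chart_growth f (A \<union> B)"
  unfolding chart_growth_def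
proof
  fix "is" :: "nat list"
  let ?c = "\<lambda>z. \<bar>fst z\<bar> powr (1 - real (length is))"
  obtain M1 where M1: "\<forall>z\<in>chart_domain A. \<bar>pds is f z\<bar> \<le> M1 * ?c z"
    using A unfolding chart_growth_def by blast
  obtain M2 where M2: "\<forall>z\<in>chart_domain B. \<bar>pds is f z\<bar> \<le> M2 * ?c z"
    using B unfolding chart_growth_def by blast
  have "\<bar>pds is f z\<bar> \<le> max M1 M2 * ?c z" if z: "z \<in> chart_domain (A \<union> B)" for z
  proof -
    have le: "M1 * ?c z \<le> max M1 M2 * ?c z" "M2 * ?c z \<le> max M1 M2 * ?c z"
      by (intro mult_right_mono; simp)+
    from z consider "z \<in> chart_domain A" | "z \<in> chart_domain B"
      by (auto simp: chart_domain_def)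
    then show ?thesis
    proof cases
      case 1 then show ?thesis using M1 le(1) by force
    next
      case 2 then show ?thesis using M2 le(2) by force
    qed
  qed
  then show "\<exists>M. \<forall>z\<in>chart_domain (A \<union> B). \<bar>pds is f z\<bar> \<le> M * ?c z" by blast
qed

lemma chart_growth_Union: "finite T \<Longrightarrow> (\<And>B. B \<in> T \<Longrightarrow> chart_growth f B) \<Longrightarrow> chart_growth f (\<Union>T)"
proof (induction T rule: finite_induct)
  case empty then show ?case by (simp add: chart_growth_def chart_domain_def)
next
  case (insert B T) then show ?case using chart_growth_Un by simp
qed

lemma chart_local:
  assumes f0: "f (0, 0) = 0" and P: "poly2 P" and Q: "poly2 Q"
    and N: "open N" "(0, v) \<in> N" "Q (0, v) \<noteq> 0" and rep: "\<forall>p\<in>N. f (fst p, fst p * snd p) = P p / Q p"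
  shows "\<exists>\<delta>>0. chart_growth f (ball (0, v) \<delta>)"
proof -
  have "open (N \<inter> {p. Q p \<noteq> 0})"
    by (intro open_Int N(1) open_Collect_neq poly2_continuous[OF Q] continuous_on_const)
  then obtain \<epsilon> where \<epsilon>: "\<epsilon> > 0" "ball (0, v) \<epsilon> \<subseteq> N \<inter> {p. Q p \<noteq> 0}"
    using N(2,3) unfolding open_contains_ball by blast
  define N' where "N' = ball (0::real, v) \<epsilon>"
  have N': "open N'" "\<forall>p\<in>N'. Q p \<noteq> 0" "N' \<subseteq> N" using \<epsilon> by (auto simp: N'_def)
  have "chart_quotient Q N' 0 f"
  proof -
    have "P (0, w) = 0" if "(0, w) \<in> N'" for w
    proof -
      have w: "(0, w) \<in> N" "Q (0, w) \<noteq> 0" using that N' by auto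
      then have "f (0, 0 * w) = P (0, w) / Q (0, w)" using rep by fastforce
      then show ?thesis using w(2) f0 by simp
    qed
    moreover have "f z = chart_fraction P Q 0 1 z"
      if "z \<in> chart_domain N'" for z
    proof -
      have z: "fst z \<noteq> 0" "(fst z, snd z / fst z) \<in> N" using that N'(3) by (auto simp: chart_domain_def)
      then have "f (fst z, fst z * (snd z / fst z)) = P (fst z, snd z / fst z) / Q (fst z, snd z / fst z)"
        using rep by fastforce
      then show ?thesis using z(1) by (simp add: chart_fraction_def)
    qed
    ultimately show ?thesis unfolding chart_quotient_def using P by blast
  qed
  then have fq: "chart_quotient Q N' (length is) (pds is f)" for "is"
    by (rule chart_quotient_pds[OF Q N'(1,2)])
  have K: "cball (0, v) (\<epsilon>/2) \<subseteq> N'" using \<epsilon>(1) by (auto simp: N'_def)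
  have "chart_growth f (cball (0, v) (\<epsilon>/2))"
    unfolding chart_growth_def using chart_quotient_growth[OF Q N'(2) K fq] by blast
  then have "chart_growth f (ball (0, v) (\<epsilon>/2))" by (rule chart_growth_mono[rotated]) auto
  then show ?thesis using \<epsilon>(1) by (intro exI[of _ "\<epsilon>/2"]) auto
qed

text \<open>By compactness of the divisor segment {0} \<times> [-1,1], local chart bounds along the divisor
  give a chart bound on a whole strip around it.\<close>

definition divisor_strip :: "real \<Rightarrow> (real \<times> real) set" where
  "divisor_strip \<rho> = {p. \<bar>fst p\<bar> < \<rho> \<and> \<bar>snd p\<bar> \<le> 1}"

lemma chart_growth_strip:
  assumes "\<And>v. \<exists>\<delta>>0. chart_growth f (ball (0, v) \<delta>)"
  shows "\<exists>\<rho>>0. chart_growth f (divisor_strip \<rho>)"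
proof -
  obtain \<delta> where \<delta>: "\<And>v. \<delta> v > 0" "\<And>v. chart_growth f (ball (0, v) (\<delta> v))" using assms by metis
  define T where "T = (\<lambda>v. ball (0::real, v) (\<delta> v)) ` UNIV"
  define S where "S = (\<lambda>w. (0::real, w)) ` {-1..1::real}"
  have "compact S" unfolding S_def by (intro compact_continuous_image continuous_intros compact_Icc)
  moreover have "S \<subseteq> \<Union>T"
  proof
    fix p assume "p \<in> S"
    then obtain w where "p = (0, w)" by (auto simp: S_def)
    then have "p \<in> ball (0, w) (\<delta> w)" using \<delta>(1)[of w] by simp
    then show "p \<in> \<Union>T" by (auto simp: T_def)
  qed
  moreover have oT: "\<And>B. B \<in> T \<Longrightarrow> open B" by (auto simp: T_def)
  ultimately obtain T' where T': "T' \<subseteq> T" "finite T'" "S \<subseteq> \<Union>T'" by (meson compactE)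
  then obtain e where e: "e > 0" "\<And>x. x \<in> S \<Longrightarrow> \<exists>G\<in>T'. ball x e \<subseteq> G"
    using Heine_Borel_lemma[OF \<open>compact S\<close>] oT by (metis subsetD)
  have "divisor_strip e \<subseteq> \<Union>T'"
  proof
    fix p assume p: "p \<in> divisor_strip e"
    then have "snd p \<in> {-1..1}" by (auto simp: divisor_strip_def abs_le_iff)
    then have "(0, snd p) \<in> S" unfolding S_def by (rule imageI)
    then obtain G where "G \<in> T'" "ball (0, snd p) e \<subseteq> G" using e(2) by blast
    moreover have "p \<in> ball (0, snd p) e" using p dist_to_axis[of p] by (simp add: dist_commute divisor_strip_def)
    ultimately show "p \<in> \<Union>T'" by blast
  qed
  moreover have "chart_growth f (\<Union>T')"
    by (rule chart_growth_Union[OF T'(2)]) (use T'(1) \<delta>(2) T_def in auto)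
  ultimately show ?thesis using e(1) chart_growth_mono by blast
qed

lemma divisor_strip_mono: "\<rho> \<le> \<rho>' \<Longrightarrow> divisor_strip \<rho> \<subseteq> divisor_strip \<rho>'"
  by (auto simp: divisor_strip_def)

text \<open>A point z near a lies, after translating a to the origin, in the
  chart domain of the strip for the first chart when |y| \<le> |x| and for the (swapped) second
  chart otherwise; in both sectors |x| or |y| is comparable to dist z a.\<close>

lemma dist_vs_coords:
  fixes z a :: "real \<times> real"
  shows "\<bar>fst z - fst a\<bar> \<le> dist z a" "\<bar>snd z - snd a\<bar> \<le> dist z a"
    "dist z a \<le> \<bar>fst z - fst a\<bar> + \<bar>snd z - snd a\<bar>"
proof -
  have d: "dist z a = sqrt ((fst z - fst a)\<^sup>2 + (snd z - snd a)\<^sup>2)"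
    by (cases z, cases a) (simp add: dist_Pair_Pair dist_real_def power2_abs)
  have "sqrt ((fst z - fst a)\<^sup>2) \<le> sqrt ((fst z - fst a)\<^sup>2 + (snd z - snd a)\<^sup>2)"
    by (rule real_sqrt_le_mono) simp
  then show "\<bar>fst z - fst a\<bar> \<le> dist z a" using d by simp
  have "sqrt ((snd z - snd a)\<^sup>2) \<le> sqrt ((fst z - fst a)\<^sup>2 + (snd z - snd a)\<^sup>2)"
    by (rule real_sqrt_le_mono) simp
  then show "\<bar>snd z - snd a\<bar> \<le> dist z a" using d by simp
  have "sqrt ((fst z - fst a)\<^sup>2 + (snd z - snd a)\<^sup>2) \<le> sqrt ((\<bar>fst z - fst a\<bar> + \<bar>snd z - snd a\<bar>)\<^sup>2)"
    by (rule real_sqrt_le_mono) (simp add: power2_eq_square algebra_simps)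
  then show "dist z a \<le> \<bar>fst z - fst a\<bar> + \<bar>snd z - snd a\<bar>" using d by simp
qed

lemma powr_compare:
  fixes u r s :: real
  assumes "0 < u" "u \<le> r" "r \<le> 2 * u" "s \<ge> 0"
  shows "u powr (1 - s) \<le> 2 powr s * r powr (1 - s)"
proof (cases "1 - s \<ge> 0")
  case True
  have "u powr (1 - s) \<le> r powr (1 - s)" by (rule powr_mono2) (use True assms in auto)
  also have "\<dots> \<le> 2 powr s * r powr (1 - s)"
  proof -
    have "1 \<le> 2 powr s" using ge_one_powr_ge_zero[of 2 s] assms(4) by simp
    from mult_right_mono[OF this, of "r powr (1 - s)"] show ?thesis by simp
  qed
  finally show ?thesis .
next
  case False
  have "u powr (1 - s) \<le> (r / 2) powr (1 - s)" by (rule powr_mono2') (use False assms in auto)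
  also have "\<dots> = r powr (1 - s) / 2 powr (1 - s)" by (rule powr_divide)
  also have "\<dots> = 2 powr (s - 1) * r powr (1 - s)"
    by (simp add: powr_minus_divide[symmetric] divide_inverse mult.commute flip: powr_minus)
  also have "\<dots> \<le> 2 powr s * r powr (1 - s)"
    by (intro mult_right_mono powr_mono) auto
  finally show ?thesis .
qed

lemma sector_chart_bound:
  fixes g :: "real \<times> real \<Rightarrow> real" and x y d M s :: real
  assumes M: "\<forall>z\<in>chart_domain (divisor_strip \<rho>). \<bar>g z\<bar> \<le> M * \<bar>fst z\<bar> powr (1 - s)"
    and xy: "x \<noteq> 0" "\<bar>y\<bar> \<le> \<bar>x\<bar>" and d: "\<bar>x\<bar> \<le> d" "d < \<rho>" "d \<le> \<bar>x\<bar> + \<bar>y\<bar>" and s: "s \<ge> 0"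
  shows "\<bar>g (x, y)\<bar> \<le> \<bar>M\<bar> * 2 powr s * d powr (1 - s)"
proof -
  have "\<bar>y / x\<bar> \<le> 1" "\<bar>x\<bar> < \<rho>" using xy d by (auto simp: abs_divide divide_le_eq_1)
  then have "(x, y) \<in> chart_domain (divisor_strip \<rho>)" using xy(1) by (simp add: chart_domain_def divisor_strip_def)
  with M have "\<bar>g (x, y)\<bar> \<le> M * \<bar>fst (x, y)\<bar> powr (1 - s)" by blast
  also have "\<dots> \<le> \<bar>M\<bar> * \<bar>x\<bar> powr (1 - s)" by (simp add: mult_right_mono)
  also have "\<dots> \<le> \<bar>M\<bar> * (2 powr s * d powr (1 - s))"
    by (intro mult_left_mono powr_compare) (use xy d s in auto)
  finally show ?thesis by (simp add: mult.assoc)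
qed

lemma growth_from_charts:
  fixes f :: "real \<times> real \<Rightarrow> real"
  assumes chart1: "chart_growth (\<lambda>z. f (fst z + fst a, snd z + snd a)) (divisor_strip \<rho>)"
    and chart2: "chart_growth (\<lambda>z. f (snd z + fst a, fst z + snd a)) (divisor_strip \<rho>)"
  shows "growth k (ball a \<rho> - {a}) a 1 f"
proof (rule growth_of_pds)
  fix "is" :: "nat list"
  define f0 where "f0 = (\<lambda>z. f (fst z + fst a, snd z + snd a))"
  define f1 where "f1 = (\<lambda>z. f (snd z + fst a, fst z + snd a))"
  let ?s = "real (length is)"
  obtain M1 where M1: "\<forall>z\<in>chart_domain (divisor_strip \<rho>). \<bar>pds is f0 z\<bar> \<le> M1 * \<bar>fst z\<bar> powr (1 - ?s)"
    using chart1 unfolding chart_growth_def f0_def by blast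
  have "\<exists>M. \<forall>z\<in>chart_domain (divisor_strip \<rho>).
      \<bar>pds (map swap_index is) f1 z\<bar> \<le> M * \<bar>fst z\<bar> powr (1 - real (length (map swap_index is)))"
    using chart2 unfolding chart_growth_def f1_def by blast
  then obtain M2 where M2: "\<forall>z\<in>chart_domain (divisor_strip \<rho>).
      \<bar>pds (map swap_index is) f1 z\<bar> \<le> M2 * \<bar>fst z\<bar> powr (1 - ?s)"
    unfolding length_map by blast
  have "\<bar>pds is f z\<bar> \<le> (\<bar>M1\<bar> + \<bar>M2\<bar>) * 2 powr ?s * dist z a powr (1 - ?s)" if z: "z \<in> ball a \<rho> - {a}" for z
  proof -
    define x where "x = fst z - fst a"
    define y where "y = snd z - snd a"
    have r: "0 < dist z a" "dist z a < \<rho>" using z by (auto simp: dist_commute)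
    have dc: "\<bar>x\<bar> \<le> dist z a" "\<bar>y\<bar> \<le> dist z a" "dist z a \<le> \<bar>x\<bar> + \<bar>y\<bar>"
      using dist_vs_coords[of z a] by (auto simp: x_def y_def)
    have pe: "pds is f z = pds is f0 (x, y)"
      using pds_shift[of "is" f "fst a" "snd a" "(x, y)"] by (simp add: f0_def x_def y_def)
    have pe1: "pds is f0 (x, y) = pds (map swap_index is) f1 (y, x)"
      using pds_swap[of "is" f1 "(x, y)"] by (simp add: f0_def f1_def)
    have le: "\<bar>M1\<bar> * 2 powr ?s * dist z a powr (1 - ?s) \<le> (\<bar>M1\<bar> + \<bar>M2\<bar>) * 2 powr ?s * dist z a powr (1 - ?s)"
      "\<bar>M2\<bar> * 2 powr ?s * dist z a powr (1 - ?s) \<le> (\<bar>M1\<bar> + \<bar>M2\<bar>) * 2 powr ?s * dist z a powr (1 - ?s)"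
      by (intro mult_right_mono; simp)+
    show ?thesis
    proof (cases "\<bar>y\<bar> \<le> \<bar>x\<bar>")
      case True
      then have "x \<noteq> 0" using r dc by auto
      have "\<bar>pds is f0 (x, y)\<bar> \<le> \<bar>M1\<bar> * 2 powr ?s * dist z a powr (1 - ?s)"
        by (rule sector_chart_bound[OF M1 \<open>x \<noteq> 0\<close> True]) (use dc r in auto)
      then show ?thesis using pe le(1) by linarith
    next
      case False
      then have "y \<noteq> 0" "\<bar>x\<bar> \<le> \<bar>y\<bar>" by auto
      have "\<bar>pds (map swap_index is) f1 (y, x)\<bar> \<le> \<bar>M2\<bar> * 2 powr ?s * dist z a powr (1 - ?s)"
        by (rule sector_chart_bound[OF M2 \<open>y \<noteq> 0\<close> \<open>\<bar>x\<bar> \<le> \<bar>y\<bar>\<close>]) (use dc r in auto)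
      then show ?thesis using pe pe1 le(2) by linarith
    qed
  qed
  then show "\<exists>M. \<forall>z\<in>ball a \<rho> - {a}. \<bar>pds is f z\<bar> \<le> M * dist z a powr (1 - ?s)" by blast
qed

lemma regular_chart_growth:
  assumes F0: "F (0, 0) = 0"
    and reg: "\<And>v. \<exists>P Q N. poly2 P \<and> poly2 Q \<and> open N \<and> (0, v) \<in> N \<and> Q (0, v) \<noteq> 0 \<and>
                 (\<forall>p\<in>N. F (fst p, fst p * snd p) = P p / Q p)"
  shows "\<exists>\<rho>>0. chart_growth F (divisor_strip \<rho>)"
proof (rule chart_growth_strip)
  fix v :: real
  obtain P Q N where "poly2 P" "poly2 Q" "open N" "(0, v) \<in> N" "Q (0, v) \<noteq> 0"
      "\<forall>p\<in>N. F (fst p, fst p * snd p) = P p / Q p"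
    using reg by blast
  then show "\<exists>\<delta>>0. chart_growth F (ball (0, v) \<delta>)" by (rule chart_local[of F, OF F0])
qed

text \<open>At a blown-up zero a, f has growth exponent 1 near a: the two charts of the blowing-up,
  in coordinates centred at a (the second one with the coordinates swapped), both satisfy
  chart bounds, and growth_from_charts combines them.\<close>

lemma blowup_point_growth:
  assumes fa: "f a = 0"
    and chart1: "\<forall>v. regular_at (\<lambda>(u, w). f (fst a + u, snd a + u * w)) (0, v)"
    and chart2: "\<forall>u. regular_at (\<lambda>(w, v). f (fst a + w * v, snd a + v)) (u, 0)"
  shows "\<exists>\<rho>>0. growth k (ball a \<rho> - {a}) a 1 f"
proof -
  define f0 where "f0 = (\<lambda>z. f (fst z + fst a, snd z + snd a))"
  define f1 where "f1 = (\<lambda>z. f (snd z + fst a, fst z + snd a))"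
  have "\<exists>\<rho>>0. chart_growth f0 (divisor_strip \<rho>)"
  proof (rule regular_chart_growth)
    show "f0 (0, 0) = 0" using fa by (simp add: f0_def)
    fix v
    obtain P Q N where h: "poly2 P" "poly2 Q" "open N" "(0, v) \<in> N" "Q (0, v) \<noteq> 0"
        "\<forall>p\<in>N. (\<lambda>(u, w). f (fst a + u, snd a + u * w)) p = P p / Q p"
      using regular_at_poly2 chart1 by blast
    have "\<forall>p\<in>N. f0 (fst p, fst p * snd p) = P p / Q p" using h(6) by (auto simp: f0_def add.commute)
    then show "\<exists>P Q N. poly2 P \<and> poly2 Q \<and> open N \<and> (0, v) \<in> N \<and> Q (0, v) \<noteq> 0 \<and>
        (\<forall>p\<in>N. f0 (fst p, fst p * snd p) = P p / Q p)" using h(1-5) by blast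
  qed
  then obtain \<rho>1 where \<rho>1: "\<rho>1 > 0" "chart_growth f0 (divisor_strip \<rho>1)" by blast
  have "\<exists>\<rho>>0. chart_growth f1 (divisor_strip \<rho>)"
  proof (rule regular_chart_growth)
    show "f1 (0, 0) = 0" using fa by (simp add: f1_def)
    fix v
    obtain P Q N where h: "poly2 P" "poly2 Q" "open N" "(v, 0) \<in> N" "Q (v, 0) \<noteq> 0"
        "\<forall>p\<in>N. (\<lambda>(w, v). f (fst a + w * v, snd a + v)) p = P p / Q p"
      using regular_at_poly2 chart2 by blast
    have "\<forall>p\<in>{p. (snd p, fst p) \<in> N}. f1 (fst p, fst p * snd p) = P (snd p, fst p) / Q (snd p, fst p)"
      using h(6) by (auto simp: f1_def add.commute mult.commute)
    then show "\<exists>P Q N. poly2 P \<and> poly2 Q \<and> open N \<and> (0, v) \<in> N \<and> Q (0, v) \<noteq> 0 \<and>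
        (\<forall>p\<in>N. f1 (fst p, fst p * snd p) = P p / Q p)"
      using h(4,5) poly2_swap[OF h(1)] poly2_swap[OF h(2)] open_swap_vimage[OF h(3)]
      by (intro exI[of _ "\<lambda>p. P (snd p, fst p)"] exI[of _ "\<lambda>p. Q (snd p, fst p)"] exI[of _ "{p. (snd p, fst p) \<in> N}"]) auto
  qed
  then obtain \<rho>2 where \<rho>2: "\<rho>2 > 0" "chart_growth f1 (divisor_strip \<rho>2)" by blast
  define \<rho> where "\<rho> = min \<rho>1 \<rho>2"
  have "divisor_strip \<rho> \<subseteq> divisor_strip \<rho>1" "divisor_strip \<rho> \<subseteq> divisor_strip \<rho>2"
    by (intro divisor_strip_mono; simp add: \<rho>_def)+
  then have "chart_growth f0 (divisor_strip \<rho>)" "chart_growth f1 (divisor_strip \<rho>)"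
    using chart_growth_mono \<rho>1(2) \<rho>2(2) by blast+
  then have "growth k (ball a \<rho> - {a}) a 1 f" unfolding f0_def f1_def by (rule growth_from_charts)
  moreover have "\<rho> > 0" using \<rho>1(1) \<rho>2(1) by (simp add: \<rho>_def)
  ultimately show ?thesis by blast
qed

lemma regulous_growth:
  assumes reg: "regulous0_1 f" and fa: "f a = 0"
  shows "\<exists>\<rho>>0. smooth_on k (ball a \<rho> - {a}) f \<and> growth k (ball a \<rho> - {a}) a 1 f"
proof -
  obtain C where C: "finite C" "\<And>z. z \<notin> C \<Longrightarrow> regular_at f z"
    "\<And>c. c \<in> C \<Longrightarrow> (\<forall>v. regular_at (\<lambda>(u, w). f (fst c + u, snd c + u * w)) (0, v)) \<and>
            (\<forall>u. regular_at (\<lambda>(w, v). f (fst c + w * v, snd c + v)) (u, 0))"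
    using reg unfolding regulous0_1_def by blast
  obtain \<rho>0 where \<rho>0: "\<rho>0 > 0" "\<forall>x\<in>C. x \<noteq> a \<longrightarrow> \<rho>0 \<le> dist a x" using finite_set_avoid[OF C(1)] by blast
  have smooth: "smooth_on k (ball a \<rho>0 - {a}) f"
  proof (rule smooth_on_cover)
    fix z assume "z \<in> ball a \<rho>0 - {a}"
    then have "z \<notin> C" using \<rho>0(2) by force
    then show "\<exists>W'. open W' \<and> z \<in> W' \<and> smooth_on k W' f" by (rule regular_at_smooth_on[OF C(2)])
  qed
  have "\<exists>\<rho>>0. growth k (ball a \<rho> - {a}) a 1 f"
  proof (cases "a \<in> C")
    case False
    obtain W where W: "open W" "a \<in> W" "smooth_on (Suc k) W f" using regular_at_smooth_on[OF C(2)[OF False]] by blast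
    then obtain r where r: "r > 0" "ball a r \<subseteq> W" by (meson open_contains_ball)
    have "growth k (ball a (r/2) - {a}) a 1 f"
      by (rule regular_point_growth[OF r(1) smooth_on_subset[OF W(3) r(2)] fa])
    then show ?thesis using r(1) by (intro exI[of _ "r/2"]) auto
  next
    case True
    then show ?thesis using blowup_point_growth[of f a, OF fa] C(3) by blast
  qed
  then obtain \<rho>1 where \<rho>1: "\<rho>1 > 0" "growth k (ball a \<rho>1 - {a}) a 1 f" by blast
  define \<rho> where "\<rho> = min \<rho>0 \<rho>1"
  have sub: "ball a \<rho> - {a} \<subseteq> ball a \<rho>0 - {a}" "ball a \<rho> - {a} \<subseteq> ball a \<rho>1 - {a}"
    by (auto simp: \<rho>_def)
  show ?thesis
    using smooth_on_subset[OF smooth sub(1)] growth_subset[OF \<rho>1(2) sub(2)] \<rho>0(1) \<rho>1(1)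
    by (intro exI[of _ \<rho>]) (auto simp: \<rho>_def)
qed

theorem corollary3p9:
  fixes k m :: nat and f :: "real \<times> real \<Rightarrow> real"
  assumes "k > 0" and "regulous0_1 f" and "m \<ge> 2 * k"
  shows "kflat k (\<lambda>z. f z ^ m)"
  unfolding kflat_def
proof (intro allI impI)
  fix a assume "f a ^ m = 0"
  then have fa: "f a = 0" using assms(1,3) by simp
  obtain \<rho> where \<rho>: "\<rho> > 0" "smooth_on k (ball a \<rho> - {a}) f" "growth k (ball a \<rho> - {a}) a 1 f"
    using regulous_growth[OF assms(2) fa] by blast
  let ?V = "ball a \<rho> - {a}"
  have "smooth_on k ?V (\<lambda>z. f z ^ m)" by (rule smooth_on_pow[OF _ \<rho>(2)]) auto
  moreover have "growth k ?V a (real m) (\<lambda>z. f z ^ m)" by (rule growth_pow[OF _ _ \<rho>(2,3)]) auto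
  moreover have "real m \<ge> real k + 1" using assms(1,3) by simp
  ultimately have "Ck_on k (ball a \<rho>) (\<lambda>z. f z ^ m) \<and> (\<forall>is. length is \<le> k \<longrightarrow> pds is (\<lambda>z. f z ^ m) a = 0)"
    using growth_imp_flat[OF \<rho>(1)] fa assms(1,3) by simp
  then show "kflat_at k (\<lambda>z. f z ^ m) a"
    unfolding kflat_at_def using \<rho>(1) by (intro conjI exI[of _ "ball a \<rho>"]) auto
qed

end
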